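(* Assume $\mathrm{char}(\Bbbk)\ne2$. The odd subalgebra $\Pi_-$ of $(\mathcal{Q}\mathit{Sym},\zeta_{\mathcal Q})$ equals Stembridge's Hopf algebra, i.e. the image of $\Theta$. The set $\{\eta_\beta\}_{\beta\text{ odd}}$ is a linear basis for $\Pi_-$, where for an odd composition $\beta$, $\eta_\beta=\sum_{\alpha\le\beta}2^{k(\alpha)}M_\alpha$ (sum over all compositions $\alpha$, not necessarily odd, with $\alpha\le\beta$).
   Context: $\mathcal{Q}\mathit{Sym}$ is the graded Hopf algebra of quasi-symmetric functions over $\Bbbk$ with basis $M_\alpha=\sum_{i_1<\cdots<i_k}x_{i_1}^{a_1}\cdots x_{i_k}^{a_k}$ for compositions $\alpha=(a_1,\dots,a_k)$, coproduct $\Delta(M_\alpha)=\sum_{\alpha=\beta\gamma}M_\beta\otimes M_\gamma$. $k(\alpha)$ is the number of parts of $\alpha$. For compositions $\alpha,\beta$ of $n$, $\alpha\le\beta$ means $\beta$ refines $\alpha$, i.e. $I(\alpha)\subseteq I(\beta)$ where $I(a_1,\dots,a_k)=\{a_1,a_1+a_2,\dots,a_1+\cdots+a_{k-1}\}$. A composition is odd if all its parts are odd. $\zeta_{\mathcal Q}$ is the character with $\zeta_{\mathcal Q}(M_\alpha)=1$ if $\alpha=(n)$ or $()$, $0$ otherwise; characters multiply by convolution and $\bar\varphi(h)=(-1)^n\varphi(h)$ in degree $n$. $\Pi_-$ is the largest graded subcoalgebra of $\mathcal{Q}\mathit{Sym}$ on which $\bar\zeta_{\mathcal Q}=\zeta_{\mathcal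 Q}^{-1}$. $\Theta\colon\mathcal{Q}\mathit{Sym}\to\mathcal{Q}\mathit{Sym}$ is the unique graded Hopf algebra morphism with $\zeta_{\mathcal Q}\circ\Theta=\bar\zeta_{\mathcal Q}^{-1}\zeta_{\mathcal Q}$ (this coincides with the map defined by Stembridge, whose image is Stembridge's peak Hopf algebra). *)

theory Defs
  imports Main
begin

text \<open>
  An element of QSym over the field 'k is encoded by its coefficient
  function f :: nat list => 'k in the monomial basis, i.e. it stands for
  Sum_alpha f(alpha) M_alpha; f must have finite support consisting of compositions.
  A tensor in QSym (x) QSym is encoded by its coefficients in the basis M_b (x) M_c.
  A linear functional on QSym is encoded by its values on the M_alpha.
\<close>

definition is_comp :: "nat list \<Rightarrow> bool" where
  "is_comp a \<longleftrightarrow> (\<forall>x\<in>set a. 0 < x)"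

definition comps :: "nat \<Rightarrow> nat list set" where
  "comps n = {a. is_comp a \<and> sum_list a = n}"

definition QSym :: "(nat list \<Rightarrow> 'k::field) set" where
  "QSym = {f. finite {a. f a \<noteq> 0} \<and> (\<forall>a. f a \<noteq> 0 \<longrightarrow> is_comp a)}"

definition Mon :: "nat list \<Rightarrow> nat list \<Rightarrow> 'k::field" where
  "Mon a = (\<lambda>b. if b = a then 1 else 0)"

definition hom_comp :: "nat \<Rightarrow> (nat list \<Rightarrow> 'k::field) \<Rightarrow> nat list \<Rightarrow> 'k" where
  "hom_comp n f = (\<lambda>a. if sum_list a = n then f a else 0)"

text \<open>Coproduct: Delta(M_a) = sum over a = b c of M_b (x) M_c.\<close>
definition coprod :: "(nat list \<Rightarrow> 'k::field) \<Rightarrow> (nat list \<times> nat list \<Rightarrow> 'k)" where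
  "coprod f = (\<lambda>(b, c). f (b @ c))"

definition tens :: "(nat list \<Rightarrow> 'k::field) \<Rightarrow> (nat list \<Rightarrow> 'k) \<Rightarrow> (nat list \<times> nat list \<Rightarrow> 'k)" where
  "tens f g = (\<lambda>(b, c). f b * g c)"

definition in_tensor_sq :: "(nat list \<Rightarrow> 'k::field) set \<Rightarrow> (nat list \<times> nat list \<Rightarrow> 'k) \<Rightarrow> bool" where
  "in_tensor_sq C t \<longleftrightarrow> (\<exists>ps. (\<forall>p\<in>set ps. fst p \<in> C \<and> snd p \<in> C) \<and>
       t = (\<lambda>x. sum_list (map (\<lambda>p. tens (fst p) (snd p) x) ps)))"

definition is_subspace :: "(nat list \<Rightarrow> 'k::field) set \<Rightarrow> bool" where
  "is_subspace C \<longleftrightarrow> C \<subseteq> QSym \<and> (\<lambda>_. 0) \<in> C \<and>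
     (\<forall>f\<in>C. \<forall>g\<in>C. (\<lambda>a. f a + g a) \<in> C) \<and> (\<forall>f\<in>C. \<forall>c. (\<lambda>a. c * f a) \<in> C)"

definition graded_subcoalgebra :: "(nat list \<Rightarrow> 'k::field) set \<Rightarrow> bool" where
  "graded_subcoalgebra C \<longleftrightarrow> is_subspace C \<and> (\<forall>f\<in>C. \<forall>n. hom_comp n f \<in> C) \<and>
     (\<forall>f\<in>C. in_tensor_sq C (coprod f))"

definition evalf :: "(nat list \<Rightarrow> 'k::field) \<Rightarrow> (nat list \<Rightarrow> 'k) \<Rightarrow> 'k" where
  "evalf phi f = (\<Sum>a\<in>{a. f a \<noteq> 0}. f a * phi a)"

definition conv :: "(nat list \<Rightarrow> 'k::field) \<Rightarrow> (nat list \<Rightarrow> 'k) \<Rightarrow> nat list \<Rightarrow> 'k" where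
  "conv phi psi = (\<lambda>a. \<Sum>i\<le>length a. phi (take i a) * psi (drop i a))"

definition counit :: "nat list \<Rightarrow> 'k::field" where
  "counit a = (if a = [] then 1 else 0)"

definition conv_inv :: "(nat list \<Rightarrow> 'k::field) \<Rightarrow> nat list \<Rightarrow> 'k" where
  "conv_inv phi = (THE psi. (\<forall>a. \<not> is_comp a \<longrightarrow> psi a = 0) \<and>
                             (\<forall>a. is_comp a \<longrightarrow> conv phi psi a = counit a))"

definition bar :: "(nat list \<Rightarrow> 'k::field) \<Rightarrow> nat list \<Rightarrow> 'k" where
  "bar phi = (\<lambda>a. (-1) ^ sum_list a * phi a)"

definition zetaQ :: "nat list \<Rightarrow> 'k::field" where
  "zetaQ a = (if is_comp a \<and> length a \<le> 1 then 1 else 0)"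

text \<open>Quasi-shuffles: M_a M_b = sum over the list qsh a b (with multiplicity).\<close>
fun qsh :: "nat list \<Rightarrow> nat list \<Rightarrow> nat list list" where
  "qsh [] ys = [ys]"
| "qsh xs [] = [xs]"
| "qsh (x # xs) (y # ys) =
     map ((#) x) (qsh xs (y # ys)) @ map ((#) y) (qsh (x # xs) ys) @ map ((#) (x + y)) (qsh xs ys)"

text \<open>A linear map QSym -> QSym encoded by its matrix T: the image of M_a is Sum_b T a b M_b.
  is_Theta T: T is a graded Hopf algebra morphism (algebra + coalgebra morphism; the antipode
  is then automatically preserved) with zeta_Q o Theta = bar(zeta_Q)^(-1) zeta_Q.\<close>
definition is_Theta :: "(nat list \<Rightarrow> nat list \<Rightarrow> 'k::field) \<Rightarrow> bool" where
  "is_Theta T \<longleftrightarrow>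
     (\<forall>a. \<not> is_comp a \<longrightarrow> T a = (\<lambda>_. 0)) \<and>
     (\<forall>a b. T a b \<noteq> 0 \<longrightarrow> is_comp b \<and> sum_list b = sum_list a) \<and>
     T [] = Mon [] \<and>
     (\<forall>a b c. is_comp a \<longrightarrow> is_comp b \<longrightarrow> is_comp c \<longrightarrow>
        sum_list (map (\<lambda>d. T d c) (qsh a b)) =
        (\<Sum>d\<in>comps (sum_list a). \<Sum>e\<in>comps (sum_list b).
            T a d * T b e * of_nat (count_list (qsh d e) c))) \<and>
     (\<forall>a b c. is_comp a \<longrightarrow> is_comp b \<longrightarrow> is_comp c \<longrightarrow>
        T a (b @ c) = (\<Sum>i\<le>length a. T (take i a) b * T (drop i a) c)) \<and>
     (\<forall>a. is_comp a \<longrightarrow> evalf zetaQ (T a) = conv (conv_inv (bar zetaQ)) zetaQ a)"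

definition Theta_mat :: "nat list \<Rightarrow> nat list \<Rightarrow> 'k::field" where
  "Theta_mat = (THE T. is_Theta T)"

definition apply_mat :: "(nat list \<Rightarrow> nat list \<Rightarrow> 'k::field) \<Rightarrow> (nat list \<Rightarrow> 'k) \<Rightarrow> nat list \<Rightarrow> 'k" where
  "apply_mat T f = (\<lambda>b. \<Sum>a\<in>{a. f a \<noteq> 0}. f a * T a b)"

definition Theta_image :: "(nat list \<Rightarrow> 'k::field) set" where
  "Theta_image = apply_mat Theta_mat ` QSym"

definition odd_ok :: "(nat list \<Rightarrow> 'k::field) set \<Rightarrow> bool" where
  "odd_ok C \<longleftrightarrow> graded_subcoalgebra C \<and>
     (\<forall>f\<in>C. evalf (bar zetaQ) f = evalf (conv_inv zetaQ) f)"

definition Pi_minus :: "(nat list \<Rightarrow> 'k::field) set" where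
  "Pi_minus = (THE C. odd_ok C \<and> (\<forall>D. odd_ok D \<longrightarrow> D \<subseteq> C))"

definition Iset :: "nat list \<Rightarrow> nat set" where
  "Iset a = {sum_list (take j a) | j. 1 \<le> j \<and> j < length a}"

definition comp_le :: "nat list \<Rightarrow> nat list \<Rightarrow> bool" where
  "comp_le a b \<longleftrightarrow> is_comp a \<and> is_comp b \<and> sum_list a = sum_list b \<and> Iset a \<subseteq> Iset b"

definition odd_comp :: "nat list \<Rightarrow> bool" where
  "odd_comp b \<longleftrightarrow> is_comp b \<and> (\<forall>x\<in>set b. odd x)"

definition eta :: "nat list \<Rightarrow> nat list \<Rightarrow> 'k::field" where
  "eta b = (\<lambda>a. if comp_le a b then 2 ^ length a else 0)"

end

theory Submission
  imports Defs
begin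

(* Theta is determined by the character nu = bar(zeta)^-1 zeta = zeta o Theta: the coefficient of
   M_c in Theta(M_a) is the sum, over the factorisations a = a_1 ... a_k with |a_i| = c_i, of
   nu(a_1) ... nu(a_k).  As nu(a) = 2 for every nonempty odd composition a, Theta(M_b) = eta_b
   for odd b.

   Pi_minus consists of the f satisfying (id (x) (bar zeta - zeta^-1) (x) id) Delta^(2) f = 0.
   Every Theta(M_a) does, because zeta^-1 o Theta = bar(zeta o Theta).  Conversely, in a solution
   f the coefficients at non-odd compositions of maximal length vanish (apply the relation at an
   even part), so subtracting multiples of the eta_b lowers the maximal length: f lies in the
   span of the eta_b, which is the image of Theta.  The eta_b are independent since eta_b has
   coefficient 2^k(b) at b and is otherwise supported on shorter compositions. *)

lemma two_neq_zero_if_CHAR_neq_2: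
  assumes "CHAR('k::field) \<noteq> 2"
  shows "(2::'k) \<noteq> 0"
proof
  assume "(2::'k) = 0"
  then have "CHAR('k) dvd 2"
    using of_nat_eq_0_iff_char_dvd[of 2, where ?'a = 'k] by simp
  then have "CHAR('k) \<in> {1, 2}"
    using dvd_imp_le[of "CHAR('k)" 2] by (cases "CHAR('k)") (auto simp: less_Suc_eq)
  then show False
    using assms CHAR_not_1[where ?'a = 'k] by auto
qed

section \<open>Compositions\<close>

lemma is_comp_Nil [simp]: "is_comp []"
  by (simp add: is_comp_def)

lemma is_comp_Cons [simp]: "is_comp (x # xs) \<longleftrightarrow> 0 < x \<and> is_comp xs"
  by (auto simp: is_comp_def)

lemma is_comp_append [simp]: "is_comp (xs @ ys) \<longleftrightarrow> is_comp xs \<and> is_comp ys"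
  by (auto simp: is_comp_def)

lemma is_comp_take [simp]: "is_comp xs \<Longrightarrow> is_comp (take i xs)"
  by (auto simp: is_comp_def dest: in_set_takeD)

lemma is_comp_drop [simp]: "is_comp xs \<Longrightarrow> is_comp (drop i xs)"
  by (auto simp: is_comp_def dest: in_set_dropD)

lemma comp_sum_list_eq_0_iff: "is_comp a \<Longrightarrow> sum_list a = 0 \<longleftrightarrow> a = []"
  by (induction a) auto

lemma comp_sum_list_pos: "is_comp a \<Longrightarrow> a \<noteq> [] \<Longrightarrow> 0 < sum_list a"
  using comp_sum_list_eq_0_iff by blast

lemma comp_length_le_sum_list: "is_comp a \<Longrightarrow> length a \<le> sum_list a"
  by (induction a) auto

lemma mem_comps [simp]: "c \<in> comps n \<longleftrightarrow> is_comp c \<and> sum_list c = n"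
  by (simp add: comps_def)

lemma comps_0: "comps 0 = {[]}"
  using comp_sum_list_eq_0_iff by auto

lemma finite_comps: "finite (comps n)"
proof (rule finite_subset)
  show "comps n \<subseteq> {xs. set xs \<subseteq> {0..n} \<and> length xs \<le> n}"
    using comp_length_le_sum_list member_le_sum_list by fastforce
  show "finite {xs. set xs \<subseteq> {0..n} \<and> length xs \<le> n}"
    by (rule finite_lists_length_le) simp
qed

lemma comps_length_ge_2:
  assumes "c \<in> comps n" "c \<noteq> [n]" "0 < n"
  shows "2 \<le> length c"
proof (rule ccontr)
  assume "\<not> 2 \<le> length c"
  then have "length c = 0 \<or> length c = 1" by linarith
  then show False using assms by (auto simp: length_Suc_conv)
qed

lemma sum_comps_Cons:
  assumes "0 < n"
  shows "(\<Sum>c\<in>comps n. F c) = (\<Sum>p\<in>{1..n}. \<Sum>ds\<in>comps (n - p). F (p # ds))"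
proof -
  have comps_n: "comps n = (\<lambda>(p, ds). p # ds) ` (SIGMA p:{1..n}. comps (n - p))"
  proof (intro set_eqI iffI)
    fix c assume "c \<in> comps n"
    with assms obtain p ds where "c = p # ds" by (cases c) auto
    with \<open>c \<in> comps n\<close> show "c \<in> (\<lambda>(p, ds). p # ds) ` (SIGMA p:{1..n}. comps (n - p))"
      by (auto intro!: image_eqI[where x = "(p, ds)"])
  qed auto
  have "inj_on (\<lambda>(p, ds). p # ds) (SIGMA p:{1..n}. comps (n - p))"
    by (auto simp: inj_on_def)
  then have "(\<Sum>c\<in>comps n. F c) = (\<Sum>(p, ds)\<in>(SIGMA p:{1..n}. comps (n - p)). F (p # ds))"
    unfolding comps_n by (subst sum.reindex) (auto simp: case_prod_unfold)
  also have "\<dots> = (\<Sum>p\<in>{1..n}. \<Sum>ds\<in>comps (n - p). F (p # ds))"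
    by (rule sum.Sigma[symmetric]) (auto simp: finite_comps)
  finally show ?thesis .
qed

lemma sum_list_take_le: "sum_list (take i a) \<le> sum_list (a :: nat list)"
  by (metis append_take_drop_id le_add1 sum_list_append)

lemma sum_list_take_drop: "sum_list (take i a) + sum_list (drop i a) = sum_list (a :: nat list)"
  by (metis append_take_drop_id sum_list_append)

lemma comp_sum_list_take_pos: "is_comp a \<Longrightarrow> 0 < i \<Longrightarrow> i \<le> length a \<Longrightarrow> 0 < sum_list (take i a)"
  by (metis comp_sum_list_pos is_comp_take le_zero_eq length_0_conv not_gr0 take_eq_Nil)

lemma sum_atMost_eq_single:
  assumes "k \<le> n" "\<And>i. i \<le> n \<Longrightarrow> i \<noteq> k \<Longrightarrow> f i = 0"
  shows "(\<Sum>i\<le>(n::nat). f i) = f k"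
proof -
  have "(\<Sum>i\<le>n. f i) = (\<Sum>i\<in>{k}. f i)"
    using assms by (intro sum.mono_neutral_right) auto
  then show ?thesis by simp
qed

lemma sum_atMost_triangle:
  "(\<Sum>i\<le>n. \<Sum>j\<le>n - i. G i (i + j)) = (\<Sum>k\<le>(n::nat). \<Sum>i\<le>k. G i k)"
proof -
  have "(\<Sum>i\<le>n. \<Sum>j\<le>n - i. G i (i + j)) = (\<Sum>(i, j)\<in>{(i, j). i + j \<le> n}. G i (i + j))"
    by (subst sum.Sigma) (auto intro!: sum.cong simp: Sigma_def)
  also have "\<dots> = (\<Sum>k\<le>n. \<Sum>i\<le>k. G i k)"
    by (subst sum.triangle_reindex_eq) (auto intro!: sum.cong)
  finally show ?thesis .
qed

section \<open>Characters and quasi-shuffles\<close>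

lemma conv_Cons_if_length_le_1:
  assumes "\<And>a. is_comp a \<Longrightarrow> 2 \<le> length a \<Longrightarrow> phi a = 0" "phi [] = 1" "is_comp (x # r)"
  shows "conv phi psi (x # r) = psi (x # r) + phi [x] * psi r"
proof -
  have "conv phi psi (x # r) = (\<Sum>i\<le>length (x # r). phi (take i (x # r)) * psi (drop i (x # r)))"
    by (simp add: conv_def)
  also have "\<dots> = (\<Sum>i\<le>1. phi (take i (x # r)) * psi (drop i (x # r)))"
    using assms by (intro sum.mono_neutral_right) auto
  finally show ?thesis using assms(2) by simp
qed

lemma conv_inv_eq_prod_list:
  fixes phi :: "nat list \<Rightarrow> 'k::field"
  assumes "\<And>a. is_comp a \<Longrightarrow> 2 \<le> length a \<Longrightarrow> phi a = 0" "phi [] = 1"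
  shows "conv_inv phi = (\<lambda>a. if is_comp a then prod_list (map (\<lambda>x. - phi [x]) a) else 0)"
    (is "_ = ?inv")
  unfolding conv_inv_def
proof (rule the_equality)
  have conv_Nil: "conv phi psi [] = psi []" for psi :: "nat list \<Rightarrow> 'k"
    using assms by (simp add: conv_def)
  have conv_Cons: "is_comp (x # r) \<Longrightarrow> conv phi psi (x # r) = psi (x # r) + phi [x] * psi r"
    for x r and psi :: "nat list \<Rightarrow> 'k"
    using assms by (rule conv_Cons_if_length_le_1)
  show "(\<forall>a. \<not> is_comp a \<longrightarrow> ?inv a = 0) \<and> (\<forall>a. is_comp a \<longrightarrow> conv phi ?inv a = counit a)"
  proof (intro conjI allI impI)
    fix a :: "nat list"
    assume "is_comp a"
    then show "conv phi ?inv a = counit a"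
      by (cases a) (auto simp: conv_Nil conv_Cons counit_def)
  qed simp
  fix psi
  assume psi: "(\<forall>a. \<not> is_comp a \<longrightarrow> psi a = 0) \<and> (\<forall>a. is_comp a \<longrightarrow> conv phi psi a = counit a)"
  show "psi = ?inv"
  proof
    fix a
    show "psi a = ?inv a"
    proof (induction a)
      case Nil
      then show ?case using psi conv_Nil[of psi] by (simp add: counit_def)
    next
      case (Cons x r)
      show ?case
      proof (cases "is_comp (x # r)")
        case True
        then have "psi (x # r) + phi [x] * psi r = 0"
          using psi conv_Cons[of x r psi] by (simp add: counit_def)
        then show ?thesis
          using Cons True by (simp add: eq_neg_iff_add_eq_0 algebra_simps)
      qed (use psi in auto)
    qed
  qed
qed

lemma conv_inv_zetaQ:
  "conv_inv (zetaQ :: nat list \<Rightarrow> 'k::field) a = (if is_comp a then (-1) ^ length a else 0)"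
proof -
  have "prod_list (map (\<lambda>x. - (zetaQ [x] :: 'k)) a) = (-1) ^ length a" if "is_comp a"
    using that by (induction a) (auto simp: zetaQ_def)
  then show ?thesis
    by (subst conv_inv_eq_prod_list) (auto simp: zetaQ_def)
qed

text \<open>The characters below are defined on all lists, not only on compositions, so that
  their behaviour under quasi-shuffles can be proved by plain list induction.\<close>

definition bar_zeta_inv :: "nat list \<Rightarrow> 'k::field" where
  "bar_zeta_inv d = (-1) ^ (sum_list d + length d)"

definition zeta_ext :: "nat list \<Rightarrow> 'k::field" where
  "zeta_ext d = (if length d \<le> 1 then 1 else 0)"

definition theta_char :: "nat list \<Rightarrow> 'k::field" where
  "theta_char d = (\<Sum>k\<le>length d. bar_zeta_inv (take k d) * zeta_ext (drop k d))"

lemma bar_zeta_inv_Nil [simp]: "bar_zeta_inv [] = 1"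
  by (simp add: bar_zeta_inv_def)

lemma bar_zeta_inv_Cons: "bar_zeta_inv (x # d) = (-1) ^ Suc x * bar_zeta_inv d"
  by (simp add: bar_zeta_inv_def power_add)

lemma zeta_ext_Nil [simp]: "zeta_ext [] = 1"
  by (simp add: zeta_ext_def)

lemma zeta_ext_Cons: "zeta_ext (x # d) = (if d = [] then 1 else 0)"
  by (simp add: zeta_ext_def)

lemma zetaQ_eq_zeta_ext: "is_comp a \<Longrightarrow> zetaQ a = zeta_ext a"
  by (simp add: zetaQ_def zeta_ext_def)

lemma conv_inv_bar_zetaQ:
  "conv_inv (bar (zetaQ :: nat list \<Rightarrow> 'k::field)) a = (if is_comp a then bar_zeta_inv a else 0)"
proof -
  have "prod_list (map (\<lambda>x. - (bar zetaQ [x] :: 'k)) a) = bar_zeta_inv a" if "is_comp a"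
    using that by (induction a) (auto simp: zetaQ_def bar_def bar_zeta_inv_Cons)
  then show ?thesis
    by (subst conv_inv_eq_prod_list) (auto simp: zetaQ_def bar_def)
qed

lemma conv_bar_zetaQ_inv_zetaQ:
  "is_comp a \<Longrightarrow> conv (conv_inv (bar zetaQ)) zetaQ a = (theta_char a :: 'k::field)"
  unfolding conv_def theta_char_def
  by (intro sum.cong) (auto simp: conv_inv_bar_zetaQ zetaQ_eq_zeta_ext)

lemma theta_char_Nil [simp]: "theta_char [] = 1"
  by (simp add: theta_char_def)

lemma theta_char_Cons: "theta_char (x # r) = (if r = [] then 1 else 0) - (-1) ^ x * theta_char r"
proof -
  have "theta_char (x # r) = zeta_ext (x # r)
      + (\<Sum>k\<le>length r. bar_zeta_inv (x # take k r) * zeta_ext (drop k r))"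
    unfolding theta_char_def by (simp add: sum.atMost_Suc_shift del: sum.atMost_Suc atMost_Suc)
  then show ?thesis
    by (simp add: bar_zeta_inv_Cons zeta_ext_Cons theta_char_def sum_distrib_left sum_negf mult.assoc)
qed

lemma theta_char_odd: "r \<noteq> [] \<Longrightarrow> \<forall>x\<in>set r. odd x \<Longrightarrow> theta_char r = (2::'k::field)"
proof (induction r)
  case (Cons x r)
  then show ?case by (cases "r = []") (auto simp: theta_char_Cons)
qed simp

lemma qsh_Nil2 [simp]: "qsh xs [] = [xs]"
  by (cases xs) auto

lemma sum_list_qsh: "d \<in> set (qsh a b) \<Longrightarrow> sum_list d = sum_list a + sum_list b"
  by (induction a b arbitrary: d rule: qsh.induct) auto

lemma is_comp_qsh: "is_comp a \<Longrightarrow> is_comp b \<Longrightarrow> d \<in> set (qsh a b) \<Longrightarrow> is_comp d"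
proof (induction a b arbitrary: d rule: qsh.induct)
  case (3 x xs y ys)
  from "3.prems"(3) have "d \<in> (#) x ` set (qsh xs (y # ys)) \<or> d \<in> (#) y ` set (qsh (x # xs) ys)
      \<or> d \<in> (#) (x + y) ` set (qsh xs ys)"
    by simp
  then show ?case
  proof (elim disjE imageE)
    fix e assume "e \<in> set (qsh xs (y # ys))" "d = x # e"
    then show ?thesis using "3.IH"(1)[of e] "3.prems"(1,2) by simp
  next
    fix e assume "e \<in> set (qsh (x # xs) ys)" "d = y # e"
    then show ?thesis using "3.IH"(2)[of e] "3.prems"(1,2) by simp
  next
    fix e assume "e \<in> set (qsh xs ys)" "d = (x + y) # e"
    then show ?thesis using "3.IH"(3)[of e] "3.prems"(1,2) by simp
  qed
qed auto

lemma sum_qsh_indicator_Nil: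
  "(\<Sum>d\<leftarrow>qsh a b. if d = [] then (1::'k::comm_ring_1) else 0) = (if a = [] \<and> b = [] then 1 else 0)"
  by (induction a b rule: qsh.induct) (simp_all add: comp_def)

lemma count_list_map_Cons:
  "count_list (map ((#) z) L) (x # cs) = (if z = x then count_list L cs else 0)"
  by (induction L) auto

lemma count_qsh_Nil: "count_list (qsh a b) [] = (if a = [] \<and> b = [] then 1 else 0)"
proof -
  have "count_list (map ((#) z) L) [] = 0" for z and L :: "nat list list"
    by (induction L) simp_all
  then show ?thesis
    by (induction a b rule: qsh.induct) (simp_all add: count_list_append)
qed

lemma count_qsh_Cons:
  "count_list (qsh (p # ds) (q # es)) (x # cs) =
     (if p = x then count_list (qsh ds (q # es)) cs else 0)
   + (if q = x then count_list (qsh (p # ds) es) cs else 0)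
   + (if p + q = x then count_list (qsh ds es) cs else 0)"
  by (simp add: count_list_append count_list_map_Cons)

lemma sum_atMost_take_drop_Cons:
  "(\<Sum>k\<le>Suc (length d). F (take k (z # d)) (drop k (z # d)))
     = F [] (z # d) + (\<Sum>k\<le>length d. F (z # take k d) (drop k d))"
  by (simp add: sum.atMost_Suc_shift del: sum.atMost_Suc atMost_Suc)

lemma sum_list_map_Cons_deconcat:
  "(\<Sum>d\<leftarrow>map ((#) z) L. \<Sum>k\<le>length d. F (take k d) (drop k d)) =
     (\<Sum>d\<leftarrow>map ((#) z) L. F [] d) + (\<Sum>d\<leftarrow>L. \<Sum>k\<le>length d. F (z # take k d) (drop k d))"
  by (induction L) (simp_all add: sum_atMost_take_drop_Cons add_ac del: sum.atMost_Suc atMost_Suc)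

lemma sum_atMost_Suc_Suc_split:
  "(\<Sum>i\<le>Suc m. \<Sum>j\<le>Suc n. H i j) =
     H 0 0 + (\<Sum>j\<le>n. H 0 (Suc j)) + (\<Sum>i\<le>m. H (Suc i) 0) + (\<Sum>i\<le>m. \<Sum>j\<le>n. H (Suc i) (Suc j))"
  by (simp add: sum.atMost_Suc_shift sum.distrib add_ac del: sum.atMost_Suc atMost_Suc)

text \<open>Deconcatenation is multiplicative for the quasi-shuffle product.\<close>

lemma qsh_deconcat:
  "(\<Sum>d\<leftarrow>qsh a b. \<Sum>k\<le>length d. F (take k d) (drop k d)) =
   (\<Sum>i\<le>length a. \<Sum>j\<le>length b.
      \<Sum>u\<leftarrow>qsh (take i a) (take j b). \<Sum>v\<leftarrow>qsh (drop i a) (drop j b). F u v)"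
proof (induction a b arbitrary: F rule: qsh.induct)
  case (3 x xs y ys)
  define a where "a = x # xs"
  define b where "b = y # ys"
  define H where "H i j = (\<Sum>u\<leftarrow>qsh (take i a) (take j b). \<Sum>v\<leftarrow>qsh (drop i a) (drop j b). F u v)"
    for i j
  have qsh_ab: "qsh a b = map ((#) x) (qsh xs b) @ map ((#) y) (qsh a ys) @ map ((#) (x + y)) (qsh xs ys)"
    by (simp add: a_def b_def)
  have lhs: "(\<Sum>d\<leftarrow>qsh a b. \<Sum>k\<le>length d. F (take k d) (drop k d)) =
      (\<Sum>d\<leftarrow>qsh a b. F [] d)
    + (\<Sum>d\<leftarrow>qsh xs b. \<Sum>k\<le>length d. F (x # take k d) (drop k d))
    + (\<Sum>d\<leftarrow>qsh a ys. \<Sum>k\<le>length d. F (y # take k d) (drop k d))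
    + (\<Sum>d\<leftarrow>qsh xs ys. \<Sum>k\<le>length d. F ((x + y) # take k d) (drop k d))"
    unfolding qsh_ab map_append sum_list_append sum_list_map_Cons_deconcat by (simp add: add_ac)
  have rhs: "(\<Sum>i\<le>length a. \<Sum>j\<le>length b. H i j) =
      H 0 0 + (\<Sum>j\<le>length ys. H 0 (Suc j)) + (\<Sum>i\<le>length xs. H (Suc i) 0)
    + (\<Sum>i\<le>length xs. \<Sum>j\<le>length ys. H (Suc i) (Suc j))"
    unfolding a_def b_def by (simp only: length_Cons sum_atMost_Suc_Suc_split)
  have H_Suc_Suc: "H (Suc i) (Suc j) =
      (\<Sum>u\<leftarrow>qsh (take i xs) (y # take j ys). \<Sum>v\<leftarrow>qsh (drop i xs) (drop j ys). F (x # u) v)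
    + (\<Sum>u\<leftarrow>qsh (x # take i xs) (take j ys). \<Sum>v\<leftarrow>qsh (drop i xs) (drop j ys). F (y # u) v)
    + (\<Sum>u\<leftarrow>qsh (take i xs) (take j ys). \<Sum>v\<leftarrow>qsh (drop i xs) (drop j ys). F ((x + y) # u) v)"
    for i j
    by (simp add: H_def a_def b_def comp_def add_ac)
  have "(\<Sum>d\<leftarrow>qsh xs b. \<Sum>k\<le>length d. F (x # take k d) (drop k d)) =
      (\<Sum>i\<le>length xs. H (Suc i) 0) +
      (\<Sum>i\<le>length xs. \<Sum>j\<le>length ys.
         \<Sum>u\<leftarrow>qsh (take i xs) (y # take j ys). \<Sum>v\<leftarrow>qsh (drop i xs) (drop j ys). F (x # u) v)"
    unfolding b_def "3.IH"(1)[of "\<lambda>u v. F (x # u) v"]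
    by (simp add: sum.atMost_Suc_shift sum.distrib H_def a_def b_def del: sum.atMost_Suc atMost_Suc)
  moreover have "(\<Sum>d\<leftarrow>qsh a ys. \<Sum>k\<le>length d. F (y # take k d) (drop k d)) =
      (\<Sum>j\<le>length ys. H 0 (Suc j)) +
      (\<Sum>i\<le>length xs. \<Sum>j\<le>length ys.
         \<Sum>u\<leftarrow>qsh (x # take i xs) (take j ys). \<Sum>v\<leftarrow>qsh (drop i xs) (drop j ys). F (y # u) v)"
    unfolding a_def "3.IH"(2)[of "\<lambda>u v. F (y # u) v"]
    by (simp add: sum.atMost_Suc_shift sum.distrib H_def a_def b_def del: sum.atMost_Suc atMost_Suc)
  moreover note "3.IH"(3)[of "\<lambda>u v. F ((x + y) # u) v"]
  moreover have "H 0 0 = (\<Sum>d\<leftarrow>qsh a b. F [] d)"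
    by (simp add: H_def)
  ultimately show ?case
    unfolding a_def[symmetric] b_def[symmetric] H_def[symmetric] lhs rhs H_Suc_Suc
    by (simp add: sum.distrib add_ac)
qed simp_all

lemma bar_zeta_inv_qsh: "(\<Sum>d\<leftarrow>qsh a b. bar_zeta_inv d) = (bar_zeta_inv a * bar_zeta_inv b :: 'k::field)"
proof (induction a b rule: qsh.induct)
  case (3 x xs y ys)
  have "(\<Sum>d\<leftarrow>qsh (x # xs) (y # ys). bar_zeta_inv d) =
      (-1) ^ Suc x * (\<Sum>d\<leftarrow>qsh xs (y # ys). bar_zeta_inv d)
    + (-1) ^ Suc y * (\<Sum>d\<leftarrow>qsh (x # xs) ys. bar_zeta_inv d)
    + (-1) ^ Suc (x + y) * (\<Sum>d\<leftarrow>qsh xs ys. bar_zeta_inv d :: 'k)"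
    by (simp add: bar_zeta_inv_Cons comp_def sum_list_const_mult del: power_Suc)
  also have "\<dots> = bar_zeta_inv (x # xs) * bar_zeta_inv (y # ys)"
    unfolding 3 bar_zeta_inv_Cons by (simp add: power_add algebra_simps)
  finally show ?case .
qed simp_all

lemma zeta_ext_qsh: "(\<Sum>d\<leftarrow>qsh a b. zeta_ext d) = (zeta_ext a * zeta_ext b :: 'k::field)"
proof (induction a b rule: qsh.induct)
  case (3 x xs y ys)
  have "(\<Sum>d\<leftarrow>qsh (x # xs) (y # ys). zeta_ext d) =
      (\<Sum>d\<leftarrow>qsh xs (y # ys). if d = [] then 1 else 0)
    + (\<Sum>d\<leftarrow>qsh (x # xs) ys. if d = [] then 1 else 0)
    + (\<Sum>d\<leftarrow>qsh xs ys. if d = [] then 1 else (0::'k))"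
    by (simp add: zeta_ext_Cons comp_def)
  then show ?case
    by (simp add: sum_qsh_indicator_Nil zeta_ext_Cons)
qed simp_all

lemma theta_char_qsh: "(\<Sum>d\<leftarrow>qsh a b. theta_char d) = (theta_char a * theta_char b :: 'k::field)"
proof -
  have "(\<Sum>d\<leftarrow>qsh a b. theta_char d) =
      (\<Sum>d\<leftarrow>qsh a b. \<Sum>k\<le>length d. bar_zeta_inv (take k d) * zeta_ext (drop k d) :: 'k)"
    by (simp add: theta_char_def)
  also have "\<dots> = (\<Sum>i\<le>length a. \<Sum>j\<le>length b.
      \<Sum>u\<leftarrow>qsh (take i a) (take j b). \<Sum>v\<leftarrow>qsh (drop i a) (drop j b). bar_zeta_inv u * zeta_ext v)"
    by (rule qsh_deconcat)
  also have "\<dots> = (\<Sum>i\<le>length a. \<Sum>j\<le>length b.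
      (bar_zeta_inv (take i a) * zeta_ext (drop i a)) * (bar_zeta_inv (take j b) * zeta_ext (drop j b)))"
    by (simp add: sum_list_const_mult sum_list_mult_const bar_zeta_inv_qsh zeta_ext_qsh mult_ac)
  also have "\<dots> = theta_char a * theta_char b"
    by (simp add: theta_char_def sum_product)
  finally show ?thesis .
qed

section \<open>An explicit formula for Theta\<close>

definition block_weight :: "nat list \<Rightarrow> nat \<Rightarrow> nat \<Rightarrow> 'k::field" where
  "block_weight a i p = (if sum_list (take i a) = p then theta_char (take i a) else 0)"

text \<open>theta_entry a c is the coefficient of M_c in Theta(M_a): the sum, over all
  factorisations a = a_1 ... a_k with sum_list a_i = c_i, of the products of the
  theta_char a_i.\<close>

fun theta_entry :: "nat list \<Rightarrow> nat list \<Rightarrow> 'k::field" where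
  "theta_entry a [] = (if a = [] then 1 else 0)"
| "theta_entry a (p # cs) = (\<Sum>i\<le>length a. block_weight a i p * theta_entry (drop i a) cs)"

definition theta_mat :: "nat list \<Rightarrow> nat list \<Rightarrow> 'k::field" where
  "theta_mat a c = (if is_comp a \<and> is_comp c then theta_entry a c else 0)"

text \<open>theta_eval a F is the value on Theta(M_a) of the functional F given on the M-basis.\<close>

definition theta_eval :: "nat list \<Rightarrow> (nat list \<Rightarrow> 'k) \<Rightarrow> 'k::field" where
  "theta_eval a F = (\<Sum>c\<in>comps (sum_list a). theta_entry a c * F c)"

lemma sum_list_eq_if_theta_entry_neq_0:
  "(theta_entry a c :: 'k::field) \<noteq> 0 \<Longrightarrow> sum_list c = sum_list a"
proof (induction c arbitrary: a)
  case (Cons p cs)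
  then obtain i where "block_weight a i p * theta_entry (drop i a) cs \<noteq> (0::'k)"
    by (auto elim!: sum.not_neutral_contains_not_neutral)
  then have "sum_list (take i a) = p" "(theta_entry (drop i a) cs :: 'k) \<noteq> 0"
    by (auto simp: block_weight_def split: if_splits)
  then show ?case
    using Cons.IH sum_list_take_drop[of i a] by fastforce
qed (auto split: if_splits)

lemma theta_mat_neq_0_imp: "theta_mat a c \<noteq> 0 \<Longrightarrow> is_comp c \<and> sum_list c = sum_list a"
  by (auto simp: theta_mat_def split: if_splits dest: sum_list_eq_if_theta_entry_neq_0)

lemma theta_entry_Nil_left: "is_comp c \<Longrightarrow> theta_entry [] c = (if c = [] then 1 else 0)"
  by (cases c) (auto simp: block_weight_def)

lemma theta_entry_single: "(theta_entry a [n] :: 'k::field) = (if sum_list a = n then theta_char a else 0)"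
proof -
  have "(theta_entry a [n] :: 'k) = block_weight a (length a) n * theta_entry (drop (length a) a) []"
    unfolding theta_entry.simps(2)
    by (rule sum_atMost_eq_single) (auto simp: block_weight_def)
  then show ?thesis
    by (simp add: block_weight_def)
qed

lemma theta_entry_append:
  "(theta_entry a (b @ c) :: 'k::field) = (\<Sum>i\<le>length a. theta_entry (take i a) b * theta_entry (drop i a) c)"
proof (induction b arbitrary: a)
  case Nil
  have "(\<Sum>i\<le>length a. theta_entry (take i a) [] * theta_entry (drop i a) c)
      = theta_entry (take 0 a) [] * (theta_entry (drop 0 a) c :: 'k)"
    by (rule sum_atMost_eq_single) auto
  then show ?case by simp
next
  case (Cons p bs)
  define n where "n = length a"
  define G where "G i k = block_weight a i p * theta_entry (drop i (take k a)) bs * (theta_entry (drop k a) c :: 'k)"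
    for i k
  have "(theta_entry a ((p # bs) @ c) :: 'k) = (\<Sum>i\<le>n. block_weight a i p *
       (\<Sum>j\<le>n - i. theta_entry (take j (drop i a)) bs * theta_entry (drop j (drop i a)) c))"
    by (simp add: Cons.IH n_def)
  also have "\<dots> = (\<Sum>i\<le>n. \<Sum>j\<le>n - i. G i (i + j))"
    by (intro sum.cong refl) (simp add: sum_distrib_left G_def drop_take mult.assoc add.commute)
  also have "\<dots> = (\<Sum>k\<le>n. \<Sum>i\<le>k. G i k)"
    by (rule sum_atMost_triangle)
  also have "\<dots> = (\<Sum>k\<le>n. theta_entry (take k a) (p # bs) * theta_entry (drop k a) c)"
    by (intro sum.cong refl)
      (auto simp: G_def sum_distrib_right n_def min_absorb1 block_weight_def intro!: sum.cong)
  finally show ?case by (simp add: n_def)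
qed

lemma theta_eval_cong:
  "(\<And>c. is_comp c \<Longrightarrow> sum_list c = sum_list a \<Longrightarrow> F c = G c) \<Longrightarrow> theta_eval a F = theta_eval a G"
  unfolding theta_eval_def by (intro sum.cong) auto

lemma theta_eval_add: "theta_eval a (\<lambda>c. F c + G c) = theta_eval a F + theta_eval a G"
  by (simp add: theta_eval_def distrib_left sum.distrib)

lemma theta_eval_scale: "theta_eval a (\<lambda>c. k * F c) = k * theta_eval a F"
  by (simp add: theta_eval_def sum_distrib_left mult_ac)

lemma theta_eval_sum: "theta_eval a (\<lambda>c. \<Sum>p\<in>P. F p c) = (\<Sum>p\<in>P. theta_eval a (F p))"
  unfolding theta_eval_def by (simp add: sum_distrib_left) (rule sum.swap)

lemma theta_eval_if_const: "theta_eval a (\<lambda>c. if P then F c else 0) = (if P then theta_eval a F else 0)"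
  by (simp add: theta_eval_def)

lemma theta_eval_Nil [simp]: "theta_eval [] F = F []"
  by (simp add: theta_eval_def comps_0)

lemma theta_eval_indicator:
  "is_comp c \<Longrightarrow> theta_eval a (\<lambda>e. if e = c then 1 else 0) = theta_entry a c"
  unfolding theta_eval_def
  by (auto simp: if_distrib finite_comps sum.delta' cong: if_cong
      dest: sum_list_eq_if_theta_entry_neq_0)

lemma theta_eval_hd:
  fixes G :: "nat list \<Rightarrow> 'k::field"
  assumes "is_comp a" "a \<noteq> []" "0 < p"
  shows "theta_eval a (\<lambda>d. if hd d = p then G d else 0) =
         (\<Sum>i\<le>length a. block_weight a i p * theta_eval (drop i a) (\<lambda>ds. G (p # ds)))"
proof -
  define n where "n = sum_list a"
  have "0 < n" using assms comp_sum_list_pos unfolding n_def by blast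
  then have "theta_eval a (\<lambda>d. if hd d = p then G d else 0) =
      (\<Sum>q\<in>{1..n}. \<Sum>ds\<in>comps (n - q). theta_entry a (q # ds) * (if q = p then G (q # ds) else 0))"
    unfolding theta_eval_def n_def[symmetric] by (simp only: sum_comps_Cons list.sel)
  also have "\<dots> = (\<Sum>q\<in>{1..n}. if q = p then (\<Sum>ds\<in>comps (n - q). theta_entry a (q # ds) * G (q # ds)) else 0)"
    by (intro sum.cong refl) (simp del: theta_entry.simps)
  also have "\<dots> = (if p \<le> n then (\<Sum>ds\<in>comps (n - p). theta_entry a (p # ds) * G (p # ds)) else 0)"
    using assms(3) by (simp add: sum.delta)
  also have "\<dots> = (\<Sum>i\<le>length a. block_weight a i p * theta_eval (drop i a) (\<lambda>ds. G (p # ds)))"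
  proof (cases "p \<le> n")
    case True
    have "(\<Sum>ds\<in>comps (n - p). theta_entry a (p # ds) * G (p # ds)) =
        (\<Sum>i\<le>length a. \<Sum>ds\<in>comps (n - p). block_weight a i p * theta_entry (drop i a) ds * G (p # ds))"
      by (simp add: sum_distrib_right) (rule sum.swap)
    also have "\<dots> = (\<Sum>i\<le>length a. block_weight a i p * theta_eval (drop i a) (\<lambda>ds. G (p # ds)))"
    proof (intro sum.cong refl)
      fix i
      show "(\<Sum>ds\<in>comps (n - p). block_weight a i p * theta_entry (drop i a) ds * G (p # ds)) =
          block_weight a i p * theta_eval (drop i a) (\<lambda>ds. G (p # ds))"
      proof (cases "sum_list (take i a) = p")
        case True
        then have "sum_list (drop i a) = n - p"
          using sum_list_take_drop[of i a] by (simp add: n_def)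
        then show ?thesis by (simp add: theta_eval_def sum_distrib_left mult.assoc)
      qed (simp add: block_weight_def)
    qed
    finally show ?thesis using True by simp
  next
    case False
    then have "(block_weight a i p :: 'k) = 0" for i
      using sum_list_take_le[of i a] by (auto simp: block_weight_def n_def)
    then show ?thesis using False by simp
  qed
  finally show ?thesis .
qed

definition qsh_weight :: "nat list \<Rightarrow> nat list \<Rightarrow> nat \<Rightarrow> nat \<Rightarrow> nat \<Rightarrow> 'k::field" where
  "qsh_weight a b i j x = (if sum_list (take i a) + sum_list (take j b) = x
     then theta_char (take i a) * theta_char (take j b) else 0)"

text \<open>The coefficients of M_c in Theta(M_a M_b) and in Theta(M_a) Theta(M_b).\<close>

definition theta_of_product :: "nat list \<Rightarrow> nat list \<Rightarrow> nat list \<Rightarrow> 'k::field" where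
  "theta_of_product a b c = (\<Sum>d\<leftarrow>qsh a b. theta_entry d c)"

definition product_of_thetas :: "nat list \<Rightarrow> nat list \<Rightarrow> nat list \<Rightarrow> 'k::field" where
  "product_of_thetas a b c = theta_eval a (\<lambda>d. theta_eval b (\<lambda>e. of_nat (count_list (qsh d e) c)))"

lemma qsh_weight_eq_block_weights:
  assumes "is_comp a" "is_comp b" "0 < x" "i \<le> length a" "j \<le> length b"
  shows "(qsh_weight a b i j x :: 'k::field) =
    (if i = 0 then block_weight b j x else 0) + (if j = 0 then block_weight a i x else 0) +
    (\<Sum>p\<in>{1..<x}. block_weight a i p * block_weight b j (x - p))"
proof (cases "i = 0 \<or> j = 0")
  case True
  then show ?thesis using assms by (auto simp: qsh_weight_def block_weight_def)
next
  case False
  then have pos: "0 < sum_list (take i a)" "0 < sum_list (take j b)"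
    using comp_sum_list_take_pos assms by blast+
  have "(\<Sum>p\<in>{1..<x}. block_weight a i p * (block_weight b j (x - p) :: 'k)) =
      (\<Sum>p\<in>{1..<x}. if p = sum_list (take i a)
         then theta_char (take i a) * block_weight b j (x - sum_list (take i a)) else 0)"
    by (intro sum.cong refl) (auto simp: block_weight_def)
  also have "\<dots> = qsh_weight a b i j x"
    using pos by (auto simp: sum.delta' block_weight_def qsh_weight_def)
  finally show ?thesis using False by simp
qed

lemma theta_of_product_Cons:
  "(theta_of_product a b (x # cs) :: 'k::field) = (\<Sum>i\<le>length a. \<Sum>j\<le>length b.
     qsh_weight a b i j x * theta_of_product (drop i a) (drop j b) cs)"
proof -
  define F where "F u v = (if sum_list u = x then theta_char u else 0) * (theta_entry v cs :: 'k)" for u v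
  have "(theta_of_product a b (x # cs) :: 'k) = (\<Sum>d\<leftarrow>qsh a b. \<Sum>k\<le>length d. F (take k d) (drop k d))"
    by (simp add: theta_of_product_def F_def block_weight_def)
  also have "\<dots> = (\<Sum>i\<le>length a. \<Sum>j\<le>length b.
      \<Sum>u\<leftarrow>qsh (take i a) (take j b). \<Sum>v\<leftarrow>qsh (drop i a) (drop j b). F u v)"
    by (rule qsh_deconcat)
  also have "\<dots> = (\<Sum>i\<le>length a. \<Sum>j\<le>length b.
      qsh_weight a b i j x * theta_of_product (drop i a) (drop j b) cs)"
  proof (intro sum.cong refl)
    fix i j
    have "(\<Sum>u\<leftarrow>qsh (take i a) (take j b). \<Sum>v\<leftarrow>qsh (drop i a) (drop j b). F u v) =
      (\<Sum>u\<leftarrow>qsh (take i a) (take j b). (if sum_list (take i a) + sum_list (take j b) = x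
         then theta_char u else 0) * theta_of_product (drop i a) (drop j b) cs)"
      by (intro arg_cong[where f = sum_list] map_cong refl)
        (simp add: F_def theta_of_product_def sum_list_const_mult sum_list_qsh)
    also have "\<dots> = qsh_weight a b i j x * theta_of_product (drop i a) (drop j b) cs"
      by (simp add: sum_list_mult_const theta_char_qsh qsh_weight_def)
    finally show "(\<Sum>u\<leftarrow>qsh (take i a) (take j b). \<Sum>v\<leftarrow>qsh (drop i a) (drop j b). F u v) = \<dots>" .
  qed
  finally show ?thesis .
qed

lemma theta_of_product_Nil: "(theta_of_product a b [] :: 'k::field) = (if a = [] \<and> b = [] then 1 else 0)"
proof -
  have "(theta_of_product a b [] :: 'k) = (\<Sum>d\<leftarrow>qsh a b. if d = [] then 1 else 0)"
    unfolding theta_of_product_def by (intro arg_cong[where f = sum_list] map_cong refl) simp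
  then show ?thesis by (simp add: sum_qsh_indicator_Nil)
qed

lemma theta_of_product_Nil_left [simp]: "theta_of_product [] b c = theta_entry b c"
  by (simp add: theta_of_product_def)

lemma theta_of_product_Nil_right [simp]: "theta_of_product a [] c = theta_entry a c"
  by (simp add: theta_of_product_def)

lemma of_nat_count_list_single: "(of_nat (count_list [e] c) :: 'k::semiring_1) = (if e = c then 1 else 0)"
  by simp

lemma product_of_thetas_Nil_left: "is_comp c \<Longrightarrow> product_of_thetas [] b c = theta_entry b c"
  unfolding product_of_thetas_def
  by (simp only: theta_eval_Nil qsh.simps(1) of_nat_count_list_single) (rule theta_eval_indicator)

lemma product_of_thetas_Nil_right: "is_comp c \<Longrightarrow> product_of_thetas a [] c = theta_entry a c"
  unfolding product_of_thetas_def
  by (simp only: theta_eval_Nil qsh_Nil2 of_nat_count_list_single) (rule theta_eval_indicator)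

lemma product_of_thetas_Nil:
  assumes "is_comp a" "a \<noteq> []"
  shows "product_of_thetas a b [] = 0"
  unfolding product_of_thetas_def theta_eval_def[of a]
proof (intro sum.neutral ballI)
  fix d assume "d \<in> comps (sum_list a)"
  then have "d \<noteq> []" using assms comp_sum_list_eq_0_iff by force
  then show "theta_entry a d * theta_eval b (\<lambda>e. of_nat (count_list (qsh d e) [])) = 0"
    by (simp add: count_qsh_Nil theta_eval_def)
qed

lemma count_qsh_Cons_hd:
  assumes "d \<noteq> []" "e \<noteq> []" "0 < hd d" "0 < hd e"
  shows "(of_nat (count_list (qsh d e) (x # cs)) :: 'k::field) =
      (if hd d = x then of_nat (count_list (qsh (tl d) e) cs) else 0)
    + (if hd e = x then of_nat (count_list (qsh d (tl e)) cs) else 0)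
    + (\<Sum>p\<in>{1..<x}. if hd d = p then
         (if hd e = x - p then of_nat (count_list (qsh (tl d) (tl e)) cs) else 0) else 0)"
proof -
  obtain p ds q es where de: "d = p # ds" "e = q # es"
    using assms by (cases d; cases e) auto
  have pos: "0 < p" "0 < q" using assms de by simp_all
  then have "(\<Sum>r\<in>{1..<x}. if p = r then (if q = x - r then
      of_nat (count_list (qsh ds es) cs) else 0) else 0) =
      (if p + q = x then of_nat (count_list (qsh ds es) cs) else (0::'k))"
    by (auto simp: sum.delta')
  then show ?thesis
    unfolding de count_qsh_Cons using pos by simp
qed

lemma theta_eval_count_qsh_Cons:
  assumes "is_comp b" "b \<noteq> []" "is_comp d" "d \<noteq> []"
  shows "theta_eval b (\<lambda>e. of_nat (count_list (qsh d e) (x # cs))) =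
      (if hd d = x then theta_eval b (\<lambda>e. of_nat (count_list (qsh (tl d) e) cs)) else 0)
    + theta_eval b (\<lambda>e. if hd e = x then of_nat (count_list (qsh d (tl e)) cs) else 0)
    + (\<Sum>p\<in>{1..<x}. if hd d = p then theta_eval b (\<lambda>e.
         if hd e = x - p then of_nat (count_list (qsh (tl d) (tl e)) cs) else 0) else (0::'k::field))"
proof -
  have hd_pos: "0 < hd c" if "is_comp c" "c \<noteq> []" for c
    using that by (cases c) auto
  have "theta_eval b (\<lambda>e. of_nat (count_list (qsh d e) (x # cs))) = theta_eval b (\<lambda>e.
        (if hd d = x then of_nat (count_list (qsh (tl d) e) cs) else 0)
      + (if hd e = x then of_nat (count_list (qsh d (tl e)) cs) else 0)
      + (\<Sum>p\<in>{1..<x}. if hd d = p then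
           (if hd e = x - p then of_nat (count_list (qsh (tl d) (tl e)) cs) else 0) else (0::'k)))"
    (is "theta_eval b ?F = theta_eval b ?G")
  proof (rule theta_eval_cong)
    fix e assume "is_comp e" "sum_list e = sum_list b"
    then have "e \<noteq> []" using assms(1,2) comp_sum_list_eq_0_iff by force
    then show "?F e = ?G e"
      using assms hd_pos \<open>is_comp e\<close> by (intro count_qsh_Cons_hd) auto
  qed
  then show ?thesis
    by (simp add: theta_eval_add theta_eval_sum theta_eval_if_const)
qed

lemma product_of_thetas_Cons_expand:
  fixes a b :: "nat list"
  assumes "is_comp a" "is_comp b" "a \<noteq> []" "b \<noteq> []" "0 < x"
  shows "(product_of_thetas a b (x # cs) :: 'k::field) =
      (\<Sum>i\<le>length a. block_weight a i x * product_of_thetas (drop i a) b cs)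
    + (\<Sum>j\<le>length b. block_weight b j x * product_of_thetas a (drop j b) cs)
    + (\<Sum>p\<in>{1..<x}. \<Sum>i\<le>length a. \<Sum>j\<le>length b.
         block_weight a i p * block_weight b j (x - p) * product_of_thetas (drop i a) (drop j b) cs)"
proof -
  define K where "K = (\<lambda>d e. of_nat (count_list (qsh d e) cs) :: 'k)"
  have "(product_of_thetas a b (x # cs) :: 'k) = theta_eval a (\<lambda>d.
        (if hd d = x then theta_eval b (K (tl d)) else 0)
      + theta_eval b (\<lambda>e. if hd e = x then K d (tl e) else 0)
      + (\<Sum>p\<in>{1..<x}. if hd d = p
           then theta_eval b (\<lambda>e. if hd e = x - p then K (tl d) (tl e) else 0) else 0))"
    (is "_ = theta_eval a ?G")
    unfolding product_of_thetas_def
  proof (rule theta_eval_cong)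
    fix d assume "is_comp d" "sum_list d = sum_list a"
    then have "d \<noteq> []" using assms(1,3) comp_sum_list_eq_0_iff by force
    show "theta_eval b (\<lambda>e. of_nat (count_list (qsh d e) (x # cs))) = ?G d"
      unfolding K_def using assms(2,4) \<open>is_comp d\<close> \<open>d \<noteq> []\<close> by (rule theta_eval_count_qsh_Cons)
  qed
  also have "\<dots> = theta_eval a (\<lambda>d. if hd d = x then theta_eval b (K (tl d)) else 0)
      + theta_eval a (\<lambda>d. theta_eval b (\<lambda>e. if hd e = x then K d (tl e) else 0))
      + (\<Sum>p\<in>{1..<x}. theta_eval a (\<lambda>d. if hd d = p
           then theta_eval b (\<lambda>e. if hd e = x - p then K (tl d) (tl e) else 0) else 0))"
    by (simp only: theta_eval_add theta_eval_sum)
  also have "theta_eval a (\<lambda>d. if hd d = x then theta_eval b (K (tl d)) else 0) =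
      (\<Sum>i\<le>length a. block_weight a i x * product_of_thetas (drop i a) b cs)"
    using assms by (simp add: theta_eval_hd product_of_thetas_def K_def)
  also have "theta_eval a (\<lambda>d. theta_eval b (\<lambda>e. if hd e = x then K d (tl e) else 0)) =
      (\<Sum>j\<le>length b. block_weight b j x * product_of_thetas a (drop j b) cs)"
    using assms by (simp add: theta_eval_hd theta_eval_sum theta_eval_scale product_of_thetas_def K_def)
  also have "(\<Sum>p\<in>{1..<x}. theta_eval a (\<lambda>d. if hd d = p
           then theta_eval b (\<lambda>e. if hd e = x - p then K (tl d) (tl e) else 0) else 0)) =
      (\<Sum>p\<in>{1..<x}. \<Sum>i\<le>length a. \<Sum>j\<le>length b.
         block_weight a i p * block_weight b j (x - p) * product_of_thetas (drop i a) (drop j b) cs)"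
    using assms
    by (intro sum.cong refl)
      (simp add: theta_eval_hd theta_eval_sum theta_eval_scale product_of_thetas_def K_def
        sum_distrib_left mult.assoc)
  finally show ?thesis .
qed

lemma product_of_thetas_Cons:
  assumes "is_comp a" "is_comp b" "a \<noteq> []" "b \<noteq> []" "0 < x"
  shows "(product_of_thetas a b (x # cs) :: 'k::field) = (\<Sum>i\<le>length a. \<Sum>j\<le>length b.
     qsh_weight a b i j x * product_of_thetas (drop i a) (drop j b) cs)"
proof -
  define R where "R i j = (product_of_thetas (drop i a) (drop j b) cs :: 'k)" for i j
  define D where "D i j = (\<Sum>p\<in>{1..<x}. block_weight a i p * (block_weight b j (x - p) :: 'k))" for i j
  have "(\<Sum>i\<le>length a. \<Sum>j\<le>length b. qsh_weight a b i j x * R i j) =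
    (\<Sum>i\<le>length a. \<Sum>j\<le>length b. (if i = 0 then block_weight b j x * R i j else 0) +
        (if j = 0 then block_weight a i x * R i j else 0) + D i j * R i j)"
    unfolding D_def using assms
    by (intro sum.cong refl) (simp add: qsh_weight_eq_block_weights distrib_right)
  also have "\<dots> = (\<Sum>j\<le>length b. block_weight b j x * R 0 j) + (\<Sum>i\<le>length a. block_weight a i x * R i 0)
      + (\<Sum>i\<le>length a. \<Sum>j\<le>length b. D i j * R i j)"
    by (simp add: sum.distrib sum.delta' if_distrib[where f = "\<lambda>y. y * _"] cong: if_cong)
      (subst sum.swap, simp add: sum.delta')
  also have "(\<Sum>i\<le>length a. \<Sum>j\<le>length b. D i j * R i j) = (\<Sum>p\<in>{1..<x}. \<Sum>i\<le>length a. \<Sum>j\<le>length b.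
      block_weight a i p * block_weight b j (x - p) * R i j)"
    unfolding D_def sum_distrib_right
    by (simp only: sum.swap[where A = "{..length b}" and B = "{1..<x}"]) (rule sum.swap)
  finally show ?thesis
    using product_of_thetas_Cons_expand[OF assms, where cs = cs] by (simp add: R_def add_ac)
qed

lemma theta_of_product_eq_product_of_thetas:
  "is_comp a \<Longrightarrow> is_comp b \<Longrightarrow> is_comp c \<Longrightarrow> (theta_of_product a b c :: 'k::field) = product_of_thetas a b c"
proof (induction c arbitrary: a b)
  case Nil
  then show ?case
    by (cases "a = [] \<or> b = []")
      (auto simp: product_of_thetas_Nil_left product_of_thetas_Nil_right theta_of_product_Nil
        product_of_thetas_Nil)
next
  case (Cons x cs)
  show ?case
  proof (cases "a = [] \<or> b = []")
    case True
    then show ?thesis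
      using Cons.prems by (auto simp: product_of_thetas_Nil_left product_of_thetas_Nil_right)
  next
    case False
    then show ?thesis
      using Cons by (simp add: theta_of_product_Cons product_of_thetas_Cons)
  qed
qed

lemma evalf_eq_sum_superset:
  "finite S \<Longrightarrow> {a. f a \<noteq> 0} \<subseteq> S \<Longrightarrow> evalf phi f = (\<Sum>a\<in>S. f a * phi a)"
  unfolding evalf_def by (rule sum.mono_neutral_left) auto

lemma sum_comps_zeta_ext:
  assumes "0 < n"
  shows "(\<Sum>c\<in>comps n. f c * zeta_ext c) = f [n]"
proof -
  have "(\<Sum>c\<in>comps n. f c * zeta_ext c) = (\<Sum>c\<in>{[n]}. f c * zeta_ext c)"
  proof (rule sum.mono_neutral_right)
    show "\<forall>c\<in>comps n - {[n]}. f c * zeta_ext c = 0"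
    proof
      fix c assume "c \<in> comps n - {[n]}"
      then have "2 \<le> length c" using assms by (intro comps_length_ge_2) auto
      then show "f c * zeta_ext c = 0" by (simp add: zeta_ext_def)
    qed
  qed (use assms in \<open>auto simp: finite_comps\<close>)
  then show ?thesis by (simp add: zeta_ext_def)
qed

lemma evalf_zetaQ_homogeneous:
  assumes "0 < n" "\<And>c. f c \<noteq> 0 \<Longrightarrow> c \<in> comps n"
  shows "evalf zetaQ f = f [n]"
proof -
  have "evalf zetaQ f = (\<Sum>c\<in>comps n. f c * zetaQ c)"
    using assms(2) by (intro evalf_eq_sum_superset) (auto simp: finite_comps)
  also have "\<dots> = (\<Sum>c\<in>comps n. f c * zeta_ext c)"
    by (intro sum.cong) (auto simp: zetaQ_eq_zeta_ext)
  finally show ?thesis using assms(1) by (simp add: sum_comps_zeta_ext)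
qed

lemma theta_mat_Nil: "theta_mat [] = Mon []"
  by (auto simp: fun_eq_iff theta_mat_def Mon_def theta_entry_Nil_left)

lemma evalf_zetaQ_Mon_Nil: "evalf zetaQ (Mon []) = 1"
  by (subst evalf_eq_sum_superset[where S = "{[]}"]) (auto simp: Mon_def zetaQ_def)

lemma evalf_zetaQ_theta_mat: "is_comp a \<Longrightarrow> evalf zetaQ (theta_mat a) = theta_char a"
proof (cases "a = []")
  case False
  assume "is_comp a"
  then have "evalf zetaQ (theta_mat a) = theta_mat a [sum_list a]"
    using False comp_sum_list_pos theta_mat_neq_0_imp
    by (intro evalf_zetaQ_homogeneous) auto
  then show ?thesis
    using \<open>is_comp a\<close> comp_sum_list_pos[OF \<open>is_comp a\<close> False]
    by (simp add: theta_mat_def theta_entry_single del: theta_entry.simps(2))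
qed (simp add: theta_mat_Nil evalf_zetaQ_Mon_Nil)

lemma is_Theta_theta_mat: "is_Theta (theta_mat :: nat list \<Rightarrow> nat list \<Rightarrow> 'k::field)"
  unfolding is_Theta_def
proof (intro conjI allI impI)
  fix a b c :: "nat list"
  assume abc: "is_comp a" "is_comp b" "is_comp c"
  have "sum_list (map (\<lambda>d. theta_mat d c) (qsh a b)) = (theta_of_product a b c :: 'k)"
    unfolding theta_of_product_def
    by (intro arg_cong[where f = sum_list] map_cong refl)
      (simp add: theta_mat_def is_comp_qsh[OF abc(1,2)] abc(3))
  also have "\<dots> = product_of_thetas a b c"
    using abc by (rule theta_of_product_eq_product_of_thetas)
  also have "\<dots> = (\<Sum>d\<in>comps (sum_list a). \<Sum>e\<in>comps (sum_list b).
      theta_mat a d * theta_mat b e * of_nat (count_list (qsh d e) c))"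
    unfolding product_of_thetas_def theta_eval_def
    by (intro sum.cong refl) (simp add: theta_mat_def abc sum_distrib_left mult.assoc)
  finally show "sum_list (map (\<lambda>d. theta_mat d c) (qsh a b)) = \<dots>" .
  show "theta_mat a (b @ c) = (\<Sum>i\<le>length a. theta_mat (take i a) b * (theta_mat (drop i a) c :: 'k))"
    using abc by (simp add: theta_mat_def theta_entry_append)
qed (auto simp: theta_mat_def theta_mat_Nil evalf_zetaQ_theta_mat conv_bar_zetaQ_inv_zetaQ
       split: if_splits dest: sum_list_eq_if_theta_entry_neq_0)

lemma is_Theta_singleton:
  assumes T: "is_Theta (T :: nat list \<Rightarrow> nat list \<Rightarrow> 'k::field)" and "is_comp a" "0 < x"
  shows "T a [x] = (if sum_list a = x then theta_char a else 0)"
proof (cases "a = []")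
  case True
  then show ?thesis using T \<open>0 < x\<close> by (simp add: is_Theta_def Mon_def)
next
  case False
  define n where "n = sum_list a"
  have n: "0 < n" using assms False comp_sum_list_pos unfolding n_def by blast
  have supp: "T a c \<noteq> 0 \<Longrightarrow> c \<in> comps n" for c
    using T by (auto simp: is_Theta_def n_def)
  have "theta_char a = evalf zetaQ (T a)"
    using T \<open>is_comp a\<close> by (simp add: is_Theta_def conv_bar_zetaQ_inv_zetaQ)
  also have "\<dots> = T a [n]"
    using n supp by (rule evalf_zetaQ_homogeneous)
  finally show ?thesis
    using supp[of "[x]"] by (auto simp: n_def)
qed

lemma is_Theta_eq_theta_entry:
  assumes T: "is_Theta (T :: nat list \<Rightarrow> nat list \<Rightarrow> 'k::field)" and "is_comp a" "is_comp c"
  shows "T a c = theta_entry a c"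
proof -
  have "\<forall>a b c. is_comp a \<longrightarrow> is_comp b \<longrightarrow> is_comp c \<longrightarrow>
      T a (b @ c) = (\<Sum>i\<le>length a. T (take i a) b * T (drop i a) c)"
    using T unfolding is_Theta_def by (elim conjE) assumption
  note deconcat = this[rule_format]
  show ?thesis
    using assms(2,3)
  proof (induction c arbitrary: a)
    case Nil
    have "T a [] \<noteq> 0 \<longrightarrow> sum_list [] = sum_list a"
      using T unfolding is_Theta_def by blast
    then have "T a [] = 0" if "a \<noteq> []"
      using comp_sum_list_eq_0_iff[of a] Nil that by auto
    then show ?case
      using T by (auto simp: is_Theta_def Mon_def)
  next
    case (Cons x cs)
    have "T a ([x] @ cs) = (\<Sum>i\<le>length a. T (take i a) [x] * T (drop i a) cs)"
      using Cons.prems by (intro deconcat) auto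
    then show ?case
      using Cons by (simp add: is_Theta_singleton[OF T] block_weight_def)
  qed
qed

lemma is_Theta_eq_theta_mat:
  assumes T: "is_Theta (T :: nat list \<Rightarrow> nat list \<Rightarrow> 'k::field)"
  shows "T = theta_mat"
proof -
  have zero: "\<forall>a. \<not> is_comp a \<longrightarrow> T a = (\<lambda>_. 0)"
    using T unfolding is_Theta_def by (elim conjE) assumption
  have supp: "\<forall>a b. T a b \<noteq> 0 \<longrightarrow> is_comp b \<and> sum_list b = sum_list a"
    using T unfolding is_Theta_def by (elim conjE) assumption
  show ?thesis
  proof (intro ext)
    fix a c
    consider "is_comp a" "is_comp c" | "\<not> is_comp a" | "\<not> is_comp c"
      by blast
    then show "T a c = theta_mat a c"
    proof cases
      case 1
      then show ?thesis using is_Theta_eq_theta_entry[OF T] by (simp add: theta_mat_def)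
    next
      case 2
      then show ?thesis using zero by (simp add: theta_mat_def)
    next
      case 3
      then show ?thesis using supp[rule_format, of a c] by (auto simp: theta_mat_def)
    qed
  qed
qed

lemma Theta_mat_eq_theta_mat: "Theta_mat = theta_mat"
  unfolding Theta_mat_def using is_Theta_theta_mat is_Theta_eq_theta_mat by (rule the_equality)

section \<open>The odd relations\<close>

lemma theta_eval_diff: "theta_eval a (\<lambda>c. F c - G c) = theta_eval a F - theta_eval a G"
  by (simp add: theta_eval_def right_diff_distrib sum_subtractf)

lemma theta_eval_minus: "theta_eval a (\<lambda>c. - F c) = - theta_eval a F"
  by (simp add: theta_eval_def sum_negf)

lemma theta_eval_zeta_ext: "is_comp a \<Longrightarrow> theta_eval a zeta_ext = theta_char a"
  by (cases "a = []")
    (auto simp: theta_eval_def sum_comps_zeta_ext comp_sum_list_pos theta_entry_single comps_0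
      simp del: theta_entry.simps(2))

text \<open>theta_alt a is the value of zeta_Q^(-1) on Theta(M_a).\<close>

definition theta_alt :: "nat list \<Rightarrow> 'k::field" where
  "theta_alt a = theta_eval a (\<lambda>c. (-1) ^ length c)"

lemma sum_block_weight:
  assumes "is_comp a" "i \<le> length a"
  shows "(\<Sum>p\<in>{1..sum_list a}. block_weight a i p :: 'k::field) = (if i = 0 then 0 else theta_char (take i a))"
proof -
  have "(\<Sum>p\<in>{1..sum_list a}. block_weight a i p :: 'k) =
      (\<Sum>p\<in>{1..sum_list a}. if p = sum_list (take i a) then theta_char (take i a) else 0)"
    by (intro sum.cong refl) (auto simp: block_weight_def)
  then show ?thesis
    using comp_sum_list_take_pos[OF assms(1), of i] assms(2) sum_list_take_le[of i a]
    by (auto simp: sum.delta')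
qed

lemma theta_alt_rec:
  assumes "is_comp a" "a \<noteq> []"
  shows "(theta_alt a :: 'k::field) = - (\<Sum>i\<in>{1..length a}. theta_char (take i a) * theta_alt (drop i a))"
proof -
  define n where "n = sum_list a"
  have n: "0 < n" using assms comp_sum_list_pos unfolding n_def by blast
  have "(theta_alt a :: 'k) = theta_eval a (\<lambda>c. \<Sum>p\<in>{1..n}. if hd c = p then - ((-1) ^ length (tl c)) else 0)"
    unfolding theta_alt_def
  proof (rule theta_eval_cong)
    fix c assume c: "is_comp c" "sum_list c = sum_list a"
    then have "c \<noteq> []"
      using n unfolding n_def by (metis less_irrefl sum_list.Nil)
    then have "hd c \<in> set c" by simp
    then have "hd c \<in> {1..n}"
      using c member_le_sum_list[of "hd c" c] by (auto simp: n_def is_comp_def)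
    with \<open>c \<noteq> []\<close> show "(-1) ^ length c = (\<Sum>p\<in>{1..n}. if hd c = p then - ((-1) ^ length (tl c)) else (0::'k))"
      by (cases c) (auto simp: sum.delta')
  qed
  also have "\<dots> = (\<Sum>p\<in>{1..n}. \<Sum>i\<le>length a. - (block_weight a i p * theta_alt (drop i a)))"
    using assms by (simp only: theta_eval_sum) (simp add: theta_eval_hd theta_eval_minus theta_alt_def)
  also have "\<dots> = - (\<Sum>i\<le>length a. (\<Sum>p\<in>{1..n}. block_weight a i p) * theta_alt (drop i a))"
    by (subst sum.swap) (simp add: sum_negf sum_distrib_right)
  also have "\<dots> = - (\<Sum>i\<le>length a. if i = 0 then 0 else theta_char (take i a) * theta_alt (drop i a))"
    using sum_block_weight[OF assms(1), where 'k = 'k] unfolding n_def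
    by (intro arg_cong[where f = uminus] sum.cong) auto
  also have "\<dots> = - (\<Sum>i\<in>{1..length a}. theta_char (take i a) * theta_alt (drop i a))"
    by (simp add: atMost_atLeast0 sum.atLeast_Suc_atMost)
  finally show ?thesis .
qed

lemma theta_alt_eq: "is_comp a \<Longrightarrow> (theta_alt a :: 'k::field) = (-1) ^ sum_list a * theta_char a"
proof (induction a)
  case Nil
  then show ?case by (simp add: theta_alt_def)
next
  case (Cons x r)
  define S where "S = (\<Sum>j\<in>{1..length r}. theta_char (take j r) * (theta_alt (drop j r) :: 'k))"
  have r: "is_comp r" using Cons.prems by simp
  have "(\<Sum>i\<in>{1..length (x # r)}. theta_char (take i (x # r)) * theta_alt (drop i (x # r)))
      = (\<Sum>j\<le>length r. theta_char (x # take j r) * (theta_alt (drop j r) :: 'k))"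
    by (simp add: sum.atLeast_Suc_atMost_Suc_shift atLeast0AtMost del: sum.cl_ivl_Suc)
  also have "\<dots> = (\<Sum>j\<le>length r. if take j r = [] then theta_alt (drop j r) else 0)
      - (-1) ^ x * (\<Sum>j\<le>length r. theta_char (take j r) * theta_alt (drop j r))"
  proof -
    have "theta_char (x # take j r) * theta_alt (drop j r) = (if take j r = [] then theta_alt (drop j r) else 0)
        - (-1) ^ x * (theta_char (take j r) * (theta_alt (drop j r) :: 'k))" for j
      by (simp add: theta_char_Cons algebra_simps)
    then show ?thesis by (simp only: sum_subtractf sum_distrib_left)
  qed
  also have "(\<Sum>j\<le>length r. if take j r = [] then theta_alt (drop j r) else 0) = theta_alt r"
    by (subst sum_atMost_eq_single[where k = 0]) auto
  also have "(\<Sum>j\<le>length r. theta_char (take j r) * theta_alt (drop j r)) = theta_alt r + S"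
    by (simp add: S_def atMost_atLeast0 sum.atLeast_Suc_atMost)
  finally have sum_eq: "(\<Sum>i\<in>{1..length (x # r)}. theta_char (take i (x # r)) * theta_alt (drop i (x # r)))
      = theta_alt r - (-1) ^ x * (theta_alt r + S)" .
  have alt_Cons: "theta_alt (x # r) = - (theta_alt r - (-1) ^ x * (theta_alt r + S))"
    unfolding sum_eq[symmetric] using Cons.prems by (rule theta_alt_rec) simp
  show ?case
  proof (cases "r = []")
    case True
    then show ?thesis
      using alt_Cons by (simp add: S_def theta_alt_def theta_char_Cons algebra_simps)
  next
    case False
    then have "S = - theta_alt r"
      using theta_alt_rec[OF r] unfolding S_def by (metis minus_minus)
    then show ?thesis
      using alt_Cons Cons.IH[OF r] False
      by (simp add: theta_char_Cons power_add algebra_simps flip: power_mult_distrib)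
  qed
qed

definition zeta_defect :: "nat list \<Rightarrow> 'k::field" where
  "zeta_defect c = bar zetaQ c - conv_inv zetaQ c"

lemma zeta_defect_comp:
  "is_comp c \<Longrightarrow> (zeta_defect c :: 'k::field) = (-1) ^ sum_list c * zeta_ext c - (-1) ^ length c"
  by (simp add: zeta_defect_def bar_def conv_inv_zetaQ zetaQ_eq_zeta_ext)

lemma theta_eval_zeta_defect: "is_comp a \<Longrightarrow> theta_eval a zeta_defect = (0::'k::field)"
proof -
  assume a: "is_comp a"
  have "theta_eval a zeta_defect = theta_eval a (\<lambda>c. (-1) ^ sum_list a * zeta_ext c - (-1) ^ length c)"
    by (rule theta_eval_cong) (simp add: zeta_defect_comp)
  also have "\<dots> = (-1) ^ sum_list a * theta_char a - (theta_alt a :: 'k)"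
    using a by (simp add: theta_eval_diff theta_eval_scale theta_eval_zeta_ext theta_alt_def)
  finally show ?thesis
    using a by (simp add: theta_alt_eq)
qed

lemma sum_comps_theta_mat_zeta_defect:
  "is_comp a \<Longrightarrow> (\<Sum>c\<in>comps n. theta_mat a c * zeta_defect c) = (0 :: 'k::field)"
proof (cases "n = sum_list a")
  case True
  assume "is_comp a"
  then have "(\<Sum>c\<in>comps n. theta_mat a c * zeta_defect c) = (theta_eval a zeta_defect :: 'k)"
    by (simp add: True theta_eval_def theta_mat_def)
  then show ?thesis
    using \<open>is_comp a\<close> by (simp add: theta_eval_zeta_defect)
next
  case False
  then show ?thesis
    by (intro sum.neutral ballI) (metis mem_comps mult_zero_left theta_mat_neq_0_imp)
qed

lemma theta_mat_append:
  "is_comp a \<Longrightarrow> (theta_mat a (b @ c) :: 'k::field) = (\<Sum>i\<le>length a. theta_mat (take i a) b * theta_mat (drop i a) c)"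
  by (cases "is_comp b \<and> is_comp c") (auto simp: theta_mat_def theta_entry_append)

text \<open>The coefficientwise form of (id \<otimes> (bar zeta_Q - zeta_Q^(-1)) \<otimes> id) Delta^(2) f = 0.\<close>

definition defect_free :: "(nat list \<Rightarrow> 'k::field) \<Rightarrow> bool" where
  "defect_free f \<longleftrightarrow> (\<forall>b d n. (\<Sum>c\<in>comps n. f (b @ c @ d) * zeta_defect c) = 0)"

lemma defect_free_diff: "defect_free f \<Longrightarrow> defect_free g \<Longrightarrow> defect_free (\<lambda>a. f a - g a)"
  unfolding defect_free_def by (simp add: algebra_simps sum_subtractf)

lemma defect_free_theta_mat: "is_comp a \<Longrightarrow> defect_free (theta_mat a :: nat list \<Rightarrow> 'k::field)"
  unfolding defect_free_def
proof (intro allI)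
  fix b d :: "nat list" and n
  assume a: "is_comp a"
  have "(\<Sum>c\<in>comps n. theta_mat a (b @ c @ d) * zeta_defect c) =
      (\<Sum>c\<in>comps n. \<Sum>i\<le>length a. \<Sum>j\<le>length (drop i a).
         theta_mat (take i a) b * theta_mat (drop j (drop i a)) d *
         (theta_mat (take j (drop i a)) c * (zeta_defect c :: 'k)))"
    using a by (simp add: theta_mat_append sum_distrib_left sum_distrib_right mult_ac)
  also have "\<dots> = (\<Sum>i\<le>length a. \<Sum>j\<le>length (drop i a).
      theta_mat (take i a) b * theta_mat (drop j (drop i a)) d *
      (\<Sum>c\<in>comps n. theta_mat (take j (drop i a)) c * zeta_defect c))"
    by (subst sum.swap) (simp add: sum_distrib_left sum.swap[of _ "comps n"])
  also have "\<dots> = 0"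
    using a by (simp add: sum_comps_theta_mat_zeta_defect)
  finally show "(\<Sum>c\<in>comps n. theta_mat a (b @ c @ d) * zeta_defect c) = (0::'k)" .
qed

section \<open>Refinement and the elements eta\<close>

definition partial_sums :: "nat list \<Rightarrow> nat set" where
  "partial_sums a = (\<lambda>j. sum_list (take j a)) ` {..length a}"

lemma partial_sums_Nil [simp]: "partial_sums [] = {0}"
  by (simp add: partial_sums_def)

lemma partial_sums_Cons: "partial_sums (x # xs) = insert 0 ((+) x ` partial_sums xs)"
  unfolding partial_sums_def by (auto simp: atMost_Suc_eq_insert_0 image_image)

lemma zero_in_partial_sums [simp]: "0 \<in> partial_sums a"
  unfolding partial_sums_def by (rule image_eqI[where x = 0]) auto

lemma sum_list_in_partial_sums [simp]: "sum_list a \<in> partial_sums a"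
  unfolding partial_sums_def by (rule image_eqI[where x = "length a"]) auto

lemma partial_sums_append: "partial_sums (u @ v) = partial_sums u \<union> (+) (sum_list u) ` partial_sums v"
  by (induction u) (auto simp: partial_sums_Cons image_image add.assoc)

lemma partial_sums_le: "s \<in> partial_sums a \<Longrightarrow> s \<le> sum_list a"
  unfolding partial_sums_def using sum_list_take_le by auto

lemma finite_partial_sums [simp]: "finite (partial_sums a)"
  by (simp add: partial_sums_def)

lemma comp_sum_list_take_strict_mono:
  assumes "is_comp a" "i < j" "j \<le> length a"
  shows "sum_list (take i a) < sum_list (take j a)"
proof -
  have "take j a = take i a @ take (j - i) (drop i a)"
    using assms by (metis le_add_diff_inverse less_imp_le_nat take_add)
  moreover have "0 < sum_list (take (j - i) (drop i a))"
    using assms by (intro comp_sum_list_take_pos) auto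
  ultimately show ?thesis by simp
qed

lemma comp_sum_list_take_inj:
  assumes "is_comp a" "i \<le> length a" "j \<le> length a" "sum_list (take i a) = sum_list (take j a)"
  shows "i = j"
  using comp_sum_list_take_strict_mono[OF assms(1), of i j]
    comp_sum_list_take_strict_mono[OF assms(1), of j i] assms
  by (cases i j rule: linorder_cases) auto

lemma card_partial_sums: "is_comp a \<Longrightarrow> card (partial_sums a) = Suc (length a)"
  unfolding partial_sums_def
  by (subst card_image) (auto simp: inj_on_def intro: comp_sum_list_take_inj)

lemma Iset_eq_partial_sums: "is_comp a \<Longrightarrow> Iset a = partial_sums a - {0, sum_list a}"
proof (intro set_eqI iffI)
  fix s assume a: "is_comp a" and "s \<in> Iset a"
  then obtain j where j: "1 \<le> j" "j < length a" "s = sum_list (take j a)"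
    by (auto simp: Iset_def)
  have "0 < s" using comp_sum_list_take_pos[OF a, of j] j by auto
  moreover have "s < sum_list a" using comp_sum_list_take_strict_mono[OF a, of j "length a"] j by auto
  moreover have "s \<in> partial_sums a"
    unfolding partial_sums_def using j by (intro image_eqI[where x = j]) auto
  ultimately show "s \<in> partial_sums a - {0, sum_list a}" by auto
next
  fix s assume "s \<in> partial_sums a - {0, sum_list a}"
  then have s: "s \<in> partial_sums a" "s \<noteq> 0" "s \<noteq> sum_list a" by auto
  then obtain j where j: "j \<le> length a" "s = sum_list (take j a)"
    unfolding partial_sums_def by blast
  have "j \<noteq> 0" "j \<noteq> length a"
    using s j by (metis take0 sum_list.Nil, metis take_all_iff order_refl)
  with j show "s \<in> Iset a" by (auto simp: Iset_def)
qed

lemma comp_le_iff_partial_sums: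
  "comp_le a b \<longleftrightarrow> is_comp a \<and> is_comp b \<and> sum_list a = sum_list b \<and> partial_sums a \<subseteq> partial_sums b"
proof -
  have "Iset a \<subseteq> Iset b \<longleftrightarrow> partial_sums a \<subseteq> partial_sums b"
    if "is_comp a" "is_comp b" "sum_list a = sum_list b"
  proof -
    have "Iset a = partial_sums a - {0, sum_list b}" "Iset b = partial_sums b - {0, sum_list b}"
      using that Iset_eq_partial_sums by simp_all
    moreover have "{0, sum_list b} \<subseteq> partial_sums b"
      by simp
    ultimately show ?thesis
      using that(3) sum_list_in_partial_sums[of a] zero_in_partial_sums[of a] by blast
  qed
  then show ?thesis
    unfolding comp_le_def by blast
qed

lemma partial_sums_inj:
  "is_comp a \<Longrightarrow> is_comp b \<Longrightarrow> partial_sums a = partial_sums b \<Longrightarrow> a = b"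
proof (induction a arbitrary: b)
  case Nil
  show ?case
  proof (cases b)
    case (Cons y ys)
    then have "y \<in> partial_sums b" by (simp add: partial_sums_Cons)
    then have "y = 0" using Nil.prems(3)[symmetric] by simp
    then show ?thesis using Nil.prems(2) Cons by simp
  qed simp
next
  case (Cons x xs)
  show ?case
  proof (cases b)
    case Nil
    have "x \<in> partial_sums (x # xs)" by (simp add: partial_sums_Cons)
    then have "x = 0" using Cons.prems(3) Nil by simp
    then show ?thesis using Cons.prems(1) by simp
  next
    case (Cons y ys)
    have pos: "0 < x" "0 < y" using Cons Cons.prems by simp_all
    have eq: "(+) x ` partial_sums xs = (+) y ` partial_sums ys"
    proof -
      have "partial_sums (x # xs) - {0} = (+) x ` partial_sums xs"
        "partial_sums b - {0} = (+) y ` partial_sums ys"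
        using pos Cons by (auto simp: partial_sums_Cons)
      then show ?thesis using Cons.prems(3) by simp
    qed
    have "x \<in> (+) y ` partial_sums ys" "y \<in> (+) x ` partial_sums xs"
      using eq image_eqI[of x "(+) x" 0 "partial_sums xs"] image_eqI[of y "(+) y" 0 "partial_sums ys"]
      by auto
    then have "y \<le> x" "x \<le> y" by auto
    then have "x = y" by simp
    then have "partial_sums xs = partial_sums ys"
      using eq by (simp add: inj_image_eq_iff)
    then show ?thesis
      using Cons.IH Cons.prems \<open>x = y\<close> \<open>b = y # ys\<close> by simp
  qed
qed

lemma comp_le_length: "comp_le a b \<Longrightarrow> length a \<le> length b"
  using card_mono[of "partial_sums b" "partial_sums a"] card_partial_sums[of a] card_partial_sums[of b]
  by (auto simp: comp_le_iff_partial_sums)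

lemma comp_le_length_eq:
  assumes "comp_le a b" "length a = length b"
  shows "a = b"
proof -
  have ab: "is_comp a" "is_comp b" "partial_sums a \<subseteq> partial_sums b"
    using assms(1) by (auto simp: comp_le_iff_partial_sums)
  then have "partial_sums a = partial_sums b"
    using assms(2) card_partial_sums[of a] card_partial_sums[of b] by (intro card_subset_eq) auto
  then show ?thesis using ab partial_sums_inj by blast
qed

lemma comp_le_Nil: "is_comp b \<Longrightarrow> comp_le [] b \<longleftrightarrow> b = []"
  using comp_sum_list_eq_0_iff[of b] by (auto simp: comp_le_iff_partial_sums)

lemma comp_le_Cons:
  assumes "is_comp b" "is_comp (x # cs)"
  shows "comp_le (x # cs) b \<longleftrightarrow> (\<exists>i\<le>length b. sum_list (take i b) = x \<and> comp_le cs (drop i b))"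
proof
  assume "comp_le (x # cs) b"
  then have P: "partial_sums (x # cs) \<subseteq> partial_sums b" and s: "x + sum_list cs = sum_list b"
    by (auto simp: comp_le_iff_partial_sums)
  have "x \<in> partial_sums b" using P by (auto simp: partial_sums_Cons)
  then obtain i where i: "i \<le> length b" "sum_list (take i b) = x"
    by (auto simp: partial_sums_def)
  have split: "partial_sums b = partial_sums (take i b) \<union> (+) x ` partial_sums (drop i b)"
    using partial_sums_append[of "take i b" "drop i b"] i by simp
  have "partial_sums cs \<subseteq> partial_sums (drop i b)"
  proof
    fix s assume "s \<in> partial_sums cs"
    then have "x + s \<in> partial_sums b" using P by (auto simp: partial_sums_Cons)
    moreover have "x + s \<notin> partial_sums (take i b)" if "0 < s"
      using that partial_sums_le[of "x + s" "take i b"] i by auto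
    ultimately show "s \<in> partial_sums (drop i b)"
      unfolding split by (cases "s = 0") auto
  qed
  moreover have "sum_list cs = sum_list (drop i b)"
    using s i sum_list_take_drop[of i b] by simp
  ultimately show "\<exists>i\<le>length b. sum_list (take i b) = x \<and> comp_le cs (drop i b)"
    using assms i by (auto simp: comp_le_iff_partial_sums)
next
  assume "\<exists>i\<le>length b. sum_list (take i b) = x \<and> comp_le cs (drop i b)"
  then obtain i where i: "i \<le> length b" "sum_list (take i b) = x" "comp_le cs (drop i b)"
    by blast
  have "partial_sums b = partial_sums (take i b) \<union> (+) x ` partial_sums (drop i b)"
    using partial_sums_append[of "take i b" "drop i b"] i by simp
  then have "partial_sums (x # cs) \<subseteq> partial_sums b"
    using i(3) by (auto simp: partial_sums_Cons comp_le_iff_partial_sums)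
  moreover have "sum_list (x # cs) = sum_list b"
    using i sum_list_take_drop[of i b] by (auto simp: comp_le_iff_partial_sums)
  ultimately show "comp_le (x # cs) b"
    using assms by (auto simp: comp_le_iff_partial_sums)
qed

lemma odd_comp_take: "odd_comp b \<Longrightarrow> odd_comp (take i b)"
  by (auto simp: odd_comp_def dest: in_set_takeD)

lemma odd_comp_drop: "odd_comp b \<Longrightarrow> odd_comp (drop i b)"
  by (auto simp: odd_comp_def dest: in_set_dropD)

text \<open>Every block of an odd b has theta_char 2, and the factorisations of b counted by
  theta_entry b c exist (uniquely) exactly when c is a coarsening of b.\<close>

lemma theta_entry_odd:
  assumes "odd_comp b" "is_comp c"
  shows "(theta_entry b c :: 'k::field) = (if comp_le c b then 2 ^ length c else 0)"
  using assms
proof (induction c arbitrary: b)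
  case Nil
  then show ?case by (auto simp: comp_le_Nil odd_comp_def)
next
  case (Cons x cs)
  have b: "is_comp b" using Cons.prems by (simp add: odd_comp_def)
  have x: "0 < x" "is_comp cs" using Cons.prems by auto
  define P where "P i \<longleftrightarrow> sum_list (take i b) = x \<and> comp_le cs (drop i b)" for i
  have "(theta_entry b (x # cs) :: 'k) = (\<Sum>i\<le>length b. if P i then 2 ^ Suc (length cs) else 0)"
    unfolding theta_entry.simps
  proof (intro sum.cong refl)
    fix i
    show "block_weight b i x * theta_entry (drop i b) cs = (if P i then 2 ^ Suc (length cs) else (0::'k))"
    proof (cases "sum_list (take i b) = x")
      case True
      then have "take i b \<noteq> []" using x by (metis less_irrefl sum_list.Nil)
      then have "theta_char (take i b) = (2::'k)"
        using odd_comp_take[OF Cons.prems(1), of i] by (intro theta_char_odd) (auto simp: odd_comp_def)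
      then show ?thesis
        using True Cons.IH[OF odd_comp_drop[OF Cons.prems(1)] x(2)] by (simp add: P_def block_weight_def)
    qed (simp add: P_def block_weight_def)
  qed
  also have "\<dots> = (if comp_le (x # cs) b then 2 ^ length (x # cs) else 0)"
  proof (cases "comp_le (x # cs) b")
    case True
    then obtain i0 where i0: "i0 \<le> length b" "P i0"
      using comp_le_Cons[OF b Cons.prems(2)] by (auto simp: P_def)
    have "P i \<longleftrightarrow> i = i0" if "i \<le> length b" for i
      using comp_sum_list_take_inj[OF b that i0(1)] i0 by (auto simp: P_def)
    then have "(\<Sum>i\<le>length b. if P i then 2 ^ Suc (length cs) else (0::'k)) = 2 ^ Suc (length cs)"
      using i0(1) by (subst sum_atMost_eq_single[where k = i0]) auto
    then show ?thesis using True by simp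
  next
    case False
    then have "\<not> P i" if "i \<le> length b" for i
      using comp_le_Cons[OF b Cons.prems(2)] that by (auto simp: P_def)
    then show ?thesis using False by (intro trans[OF sum.neutral]) auto
  qed
  finally show ?case .
qed

lemma theta_mat_odd: "odd_comp b \<Longrightarrow> (theta_mat b :: nat list \<Rightarrow> 'k::field) = eta b"
  by (auto simp: fun_eq_iff theta_mat_def eta_def theta_entry_odd odd_comp_def comp_le_def)

section \<open>The span of the eta_b, b odd\<close>

definition odd_coeffs :: "(nat list \<Rightarrow> 'k::field) \<Rightarrow> bool" where
  "odd_coeffs c \<longleftrightarrow> finite {b. c b \<noteq> 0} \<and> (\<forall>b. c b \<noteq> 0 \<longrightarrow> odd_comp b)"

definition eta_comb :: "(nat list \<Rightarrow> 'k::field) \<Rightarrow> nat list \<Rightarrow> 'k" where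
  "eta_comb c = (\<lambda>a. \<Sum>b\<in>{b. c b \<noteq> 0}. c b * eta b a)"

definition eta_span :: "(nat list \<Rightarrow> 'k::field) set" where
  "eta_span = {f. \<exists>c. odd_coeffs c \<and> f = eta_comb c}"

lemma eta_comb_superset: "finite S \<Longrightarrow> {b. c b \<noteq> 0} \<subseteq> S \<Longrightarrow> eta_comb c a = (\<Sum>b\<in>S. c b * eta b a)"
  unfolding eta_comb_def by (rule sum.mono_neutral_left) auto

lemma eta_neq_0_imp: "eta b a \<noteq> 0 \<Longrightarrow> comp_le a b"
  by (auto simp: eta_def split: if_splits)

lemma eta_length_ge:
  assumes "length b \<le> length a"
  shows "(eta b a :: 'k::field) = (if a = b \<and> is_comp b then 2 ^ length b else 0)"
proof (cases "(eta b a :: 'k) = 0")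
  case False
  then have "comp_le a b" by (rule eta_neq_0_imp)
  moreover from this have "a = b"
    using assms comp_le_length[of a b] by (intro comp_le_length_eq) auto
  ultimately show ?thesis by (simp add: eta_def comp_le_def)
qed (auto simp: eta_def comp_le_def)

lemma scaled_eta_in_eta_span: "odd_comp b \<Longrightarrow> (\<lambda>a. k * eta b a) \<in> eta_span"
proof -
  assume b: "odd_comp b"
  define c where "c = (\<lambda>x. if x = b then k else 0)"
  have supp: "{x. c x \<noteq> 0} \<subseteq> {b}" by (auto simp: c_def)
  then have "odd_coeffs c"
    using b by (auto simp: odd_coeffs_def c_def intro: finite_subset)
  moreover have "(\<lambda>a. k * eta b a) = eta_comb c"
    using eta_comb_superset[OF _ supp] by (simp add: fun_eq_iff c_def)
  ultimately show ?thesis by (auto simp: eta_span_def)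
qed

lemma eta_in_eta_span: "odd_comp b \<Longrightarrow> eta b \<in> eta_span"
  using scaled_eta_in_eta_span[of b 1] by simp

lemma eta_span_add:
  assumes "f \<in> eta_span" "g \<in> eta_span"
  shows "(\<lambda>a. f a + g a) \<in> eta_span"
proof -
  obtain c1 c2 where c: "odd_coeffs c1" "f = eta_comb c1" "odd_coeffs c2" "g = eta_comb c2"
    using assms by (auto simp: eta_span_def)
  define S where "S = {b. c1 b \<noteq> 0} \<union> {b. c2 b \<noteq> 0}"
  have S: "finite S" using c by (auto simp: odd_coeffs_def S_def)
  define c where "c b = c1 b + c2 b" for b
  have supp: "{b. c b \<noteq> 0} \<subseteq> S" by (auto simp: c_def S_def)
  then have "odd_coeffs c"
    using c S by (auto simp: odd_coeffs_def S_def intro: finite_subset)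
  moreover have "(\<lambda>a. f a + g a) = eta_comb c"
    using c S supp
    by (auto simp: fun_eq_iff eta_comb_superset[OF S] c_def S_def distrib_right sum.distrib)
  ultimately show ?thesis by (auto simp: eta_span_def)
qed

lemma eta_span_sum:
  "finite A \<Longrightarrow> (\<And>x. x \<in> A \<Longrightarrow> g x \<in> eta_span) \<Longrightarrow> (\<lambda>a. \<Sum>x\<in>A. g x a) \<in> eta_span"
proof (induction A rule: finite_induct)
  case empty
  have "odd_coeffs (\<lambda>_. 0) \<and> (\<lambda>_. 0) = eta_comb (\<lambda>_. 0)"
    by (simp add: odd_coeffs_def eta_comb_def)
  then show ?case by (auto simp: eta_span_def)
next
  case (insert x F)
  then show ?case
    using eta_span_add[of "g x" "\<lambda>a. \<Sum>y\<in>F. g y a"] by simp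
qed

lemma sum_scaled_etas_in_eta_span:
  assumes "odd_coeffs c" "\<And>b. odd_comp b \<Longrightarrow> (\<lambda>a. h b * eta b a) \<in> eta_span"
  shows "(\<lambda>a. \<Sum>b\<in>{b. c b \<noteq> 0}. h b * eta b a) \<in> eta_span"
  using assms by (intro eta_span_sum) (auto simp: odd_coeffs_def)

lemma eta_span_scale: "f \<in> eta_span \<Longrightarrow> (\<lambda>a. k * f a) \<in> eta_span"
proof -
  assume "f \<in> eta_span"
  then obtain c where c: "odd_coeffs c" "f = eta_comb c" by (auto simp: eta_span_def)
  have "(\<lambda>a. \<Sum>b\<in>{b. c b \<noteq> 0}. (k * c b) * eta b a) \<in> eta_span"
    using c(1) scaled_eta_in_eta_span by (rule sum_scaled_etas_in_eta_span)
  then show ?thesis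
    by (simp add: c(2) eta_comb_def sum_distrib_left mult.assoc)
qed

lemma hom_comp_in_eta_span: "f \<in> eta_span \<Longrightarrow> hom_comp n f \<in> eta_span"
proof -
  assume "f \<in> eta_span"
  then obtain c where c: "odd_coeffs c" "f = eta_comb c" by (auto simp: eta_span_def)
  have "(\<lambda>a. \<Sum>b\<in>{b. c b \<noteq> 0}. (if sum_list b = n then c b else 0) * eta b a) \<in> eta_span"
    using c(1) scaled_eta_in_eta_span by (rule sum_scaled_etas_in_eta_span)
  moreover have "hom_comp n f = (\<lambda>a. \<Sum>b\<in>{b. c b \<noteq> 0}. (if sum_list b = n then c b else 0) * eta b a)"
  proof
    fix a
    have "hom_comp n f a = (\<Sum>b\<in>{b. c b \<noteq> 0}. if sum_list a = n then c b * eta b a else 0)"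
      by (cases "sum_list a = n") (simp_all add: hom_comp_def c(2) eta_comb_def)
    also have "\<dots> = (\<Sum>b\<in>{b. c b \<noteq> 0}. (if sum_list b = n then c b else 0) * eta b a)"
      by (intro sum.cong refl) (auto simp: eta_def comp_le_def)
    finally show "hom_comp n f a = \<dots>" .
  qed
  ultimately show ?thesis by simp
qed

lemma eta_comb_neq_0_imp:
  assumes "odd_coeffs c" "eta_comb c a \<noteq> 0"
  obtains b where "c b \<noteq> 0" "odd_comp b" "comp_le a b"
proof -
  have "(\<Sum>b\<in>{b. c b \<noteq> 0}. c b * eta b a) \<noteq> 0"
    using assms(2) by (simp add: eta_comb_def)
  then obtain b where "b \<in> {b. c b \<noteq> 0}" "c b * eta b a \<noteq> 0"
    by (rule sum.not_neutral_contains_not_neutral)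
  then show ?thesis
    using assms(1) that by (auto simp: odd_coeffs_def dest: eta_neq_0_imp)
qed

lemma eta_span_subset_QSym: "(eta_span :: (nat list \<Rightarrow> 'k::field) set) \<subseteq> QSym"
proof
  fix f :: "nat list \<Rightarrow> 'k"
  assume "f \<in> eta_span"
  then obtain c where c: "odd_coeffs c" "f = eta_comb c" by (auto simp: eta_span_def)
  have supp: "{a. f a \<noteq> 0} \<subseteq> (\<Union>b\<in>{b. c b \<noteq> 0}. comps (sum_list b))"
    using c by (auto simp: comp_le_def elim!: eta_comb_neq_0_imp)
  moreover have "finite (\<Union>b\<in>{b. c b \<noteq> 0}. comps (sum_list b))"
    using c(1) by (simp add: odd_coeffs_def finite_comps)
  ultimately show "f \<in> QSym"
    using supp by (auto simp: QSym_def intro: finite_subset)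
qed

lemma eta_comb_eq_sum_theta_mat:
  "odd_coeffs c \<Longrightarrow> eta_comb c a = (\<Sum>b\<in>{b. c b \<noteq> 0}. c b * theta_mat b a)"
  unfolding eta_comb_def by (intro sum.cong refl) (simp add: odd_coeffs_def theta_mat_odd)

lemma eta_append:
  assumes "odd_comp b"
  shows "(eta b (x @ y) :: 'k::field) = (\<Sum>i\<le>length b. eta (take i b) x * eta (drop i b) y)"
proof -
  have "is_comp b" using assms by (simp add: odd_comp_def)
  then show ?thesis
    using theta_mat_append[of b x y] by (simp add: assms theta_mat_odd odd_comp_take odd_comp_drop)
qed

lemma in_tensor_sq_coprodI:
  fixes n :: "nat list \<Rightarrow> nat" and g h :: "nat list \<Rightarrow> nat \<Rightarrow> nat list \<Rightarrow> 'k::field"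
  assumes "finite B" and mem: "\<And>b i. b \<in> B \<Longrightarrow> i \<le> n b \<Longrightarrow> g b i \<in> D \<and> h b i \<in> D"
    and f: "\<And>u v. f (u @ v) = (\<Sum>b\<in>B. \<Sum>i\<le>n b. g b i u * h b i v)"
  shows "in_tensor_sq D (coprod f)"
proof -
  obtain bl where bl: "set bl = B" "distinct bl" using finite_distinct_list[OF assms(1)] by blast
  define G where "G b = map (\<lambda>i. (g b i, h b i)) [0..<Suc (n b)]" for b
  define ps where "ps = concat (map G bl)"
  have "\<forall>p\<in>set ps. fst p \<in> D \<and> snd p \<in> D"
    using bl mem by (auto simp: ps_def G_def)
  moreover have "coprod f = (\<lambda>x. \<Sum>p\<leftarrow>ps. tens (fst p) (snd p) x)"
  proof
    fix x :: "nat list \<times> nat list"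
    obtain u v where x: "x = (u, v)" by (cases x)
    have "(\<Sum>p\<leftarrow>G b. tens (fst p) (snd p) x) = (\<Sum>i\<le>n b. g b i u * h b i v)" for b
      by (simp add: G_def tens_def x comp_def sum_set_upt_conv_sum_list_nat[symmetric]
          atLeast0LessThan lessThan_Suc_atMost del: upt_Suc)
    then have "coprod f x = (\<Sum>b\<leftarrow>bl. \<Sum>p\<leftarrow>G b. tens (fst p) (snd p) x)"
      using bl by (simp add: coprod_def x f sum_list_distinct_conv_sum_set)
    also have "\<dots> = (\<Sum>p\<leftarrow>ps. tens (fst p) (snd p) x)"
      unfolding ps_def by (induction bl) simp_all
    finally show "coprod f x = (\<Sum>p\<leftarrow>ps. tens (fst p) (snd p) x)" .
  qed
  ultimately show ?thesis unfolding in_tensor_sq_def by blast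
qed

lemma coprod_eta_span_in_tensor_sq:
  fixes f :: "nat list \<Rightarrow> 'k::field"
  assumes "f \<in> eta_span"
  shows "in_tensor_sq eta_span (coprod f)"
proof -
  obtain c where c: "odd_coeffs c" "f = eta_comb c" using assms by (auto simp: eta_span_def)
  have odd: "odd_comp b" "finite {b. c b \<noteq> 0}" if "c b \<noteq> 0" for b
    using c(1) that by (auto simp: odd_coeffs_def)
  show ?thesis
  proof (rule in_tensor_sq_coprodI)
    show "f (u @ v) = (\<Sum>b\<in>{b. c b \<noteq> 0}. \<Sum>i\<le>length b. (\<lambda>a. c b * eta (take i b) a) u * eta (drop i b) v)"
      for u v
      using odd by (simp add: c(2) eta_comb_def eta_append sum_distrib_left mult.assoc)
  qed (use c(1) odd in \<open>auto simp: odd_coeffs_def intro: scaled_eta_in_eta_span eta_in_eta_span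
        odd_comp_take odd_comp_drop\<close>)
qed

lemma evalf_bar_zetaQ_minus_conv_inv:
  "finite S \<Longrightarrow> {a. f a \<noteq> 0} \<subseteq> S \<Longrightarrow>
     evalf (bar zetaQ) f - evalf (conv_inv zetaQ) f = (\<Sum>a\<in>S. f a * zeta_defect a)"
  by (simp add: evalf_eq_sum_superset zeta_defect_def sum_subtractf algebra_simps)

lemma evalf_bar_zetaQ_eta_span:
  assumes "f \<in> eta_span"
  shows "evalf (bar zetaQ) f = evalf (conv_inv zetaQ) f"
proof -
  obtain c where c: "odd_coeffs c" "f = eta_comb c" using assms by (auto simp: eta_span_def)
  define B where "B = {b. c b \<noteq> 0}"
  define S where "S = (\<Union>b\<in>B. comps (sum_list b))"
  have S: "finite S" using c(1) by (simp add: S_def B_def odd_coeffs_def finite_comps)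
  have supp: "{a. f a \<noteq> 0} \<subseteq> S"
    using c by (auto simp: S_def B_def comp_le_def elim!: eta_comb_neq_0_imp)
  have "evalf (bar zetaQ) f - evalf (conv_inv zetaQ) f = (\<Sum>a\<in>S. \<Sum>b\<in>B. c b * (theta_mat b a * zeta_defect a))"
    using S supp
    by (simp add: evalf_bar_zetaQ_minus_conv_inv c(2) eta_comb_eq_sum_theta_mat[OF c(1)] B_def
        sum_distrib_right mult.assoc)
  also have "\<dots> = (\<Sum>b\<in>B. c b * (\<Sum>a\<in>comps (sum_list b). theta_mat b a * zeta_defect a))"
  proof (subst sum.swap, intro sum.cong refl)
    fix b assume "b \<in> B"
    have "(\<Sum>a\<in>S. theta_mat b a * zeta_defect a) = (\<Sum>a\<in>comps (sum_list b). theta_mat b a * zeta_defect a)"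
    proof (rule sum.mono_neutral_right)
      show "\<forall>a\<in>S - comps (sum_list b). theta_mat b a * zeta_defect a = 0"
        by (metis DiffD2 mem_comps mult_zero_left theta_mat_neq_0_imp)
    qed (use S \<open>b \<in> B\<close> in \<open>auto simp: S_def\<close>)
    then show "(\<Sum>a\<in>S. c b * (theta_mat b a * zeta_defect a)) =
        c b * (\<Sum>a\<in>comps (sum_list b). theta_mat b a * zeta_defect a)"
      by (metis sum_distrib_left)
  qed
  also have "\<dots> = 0"
    using c(1) by (intro sum.neutral ballI) (simp add: B_def odd_coeffs_def odd_comp_def
        sum_comps_theta_mat_zeta_defect)
  finally show ?thesis by simp
qed

lemma defect_free_eta_span:
  fixes f :: "nat list \<Rightarrow> 'k::field"
  assumes "f \<in> eta_span"
  shows "defect_free f"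
proof -
  from assms obtain c where c: "odd_coeffs c" "f = eta_comb c" by (auto simp: eta_span_def)
  have "(\<Sum>x\<in>comps n. f (b @ x @ d) * zeta_defect x) = 0" for b d n
  proof -
    have "(\<Sum>x\<in>comps n. f (b @ x @ d) * zeta_defect x) =
        (\<Sum>\<beta>\<in>{b. c b \<noteq> 0}. c \<beta> * (\<Sum>x\<in>comps n. theta_mat \<beta> (b @ x @ d) * zeta_defect x))"
      unfolding c(2) eta_comb_eq_sum_theta_mat[OF c(1)] sum_distrib_right sum_distrib_left
      by (subst sum.swap) (simp add: mult.assoc)
    also have "\<dots> = 0"
    proof (intro sum.neutral ballI)
      fix \<beta> assume "\<beta> \<in> {b. c b \<noteq> 0}"
      then have "defect_free (theta_mat \<beta> :: nat list \<Rightarrow> 'k)"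
        using c(1) by (intro defect_free_theta_mat) (auto simp: odd_coeffs_def odd_comp_def)
      then show "c \<beta> * (\<Sum>x\<in>comps n. theta_mat \<beta> (b @ x @ d) * zeta_defect x) = 0"
        by (simp add: defect_free_def)
    qed
    finally show ?thesis .
  qed
  then show ?thesis by (simp add: defect_free_def)
qed

lemma odd_ok_eta_span: "odd_ok eta_span"
  unfolding odd_ok_def graded_subcoalgebra_def is_subspace_def
  using eta_span_subset_QSym eta_span_sum[of "{}"] eta_span_add eta_span_scale hom_comp_in_eta_span
    coprod_eta_span_in_tensor_sq evalf_bar_zetaQ_eta_span
  by auto

lemma sum_sum_list_commute:
  "(\<Sum>c\<in>S. \<Sum>p\<leftarrow>ps. F p c) = (\<Sum>p\<leftarrow>ps. \<Sum>c\<in>S. F p c)"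
  by (induction ps) (auto simp: sum.distrib)

lemma in_tensor_sq_coprod_imp:
  assumes "in_tensor_sq D (coprod g)"
  shows "\<exists>ps. (\<forall>p\<in>set ps. fst p \<in> D \<and> snd p \<in> D) \<and>
    (\<forall>x y. g (x @ y) = (\<Sum>p\<leftarrow>ps. fst p x * snd p y))"
proof -
  obtain ps where ps: "\<forall>p\<in>set ps. fst p \<in> D \<and> snd p \<in> D"
    "coprod g = (\<lambda>x. \<Sum>p\<leftarrow>ps. tens (fst p) (snd p) x)"
    using assms unfolding in_tensor_sq_def by blast
  have "g (x @ y) = (\<Sum>p\<leftarrow>ps. fst p x * snd p y)" for x y
    using fun_cong[OF ps(2), of "(x, y)"] by (simp add: coprod_def tens_def)
  with ps(1) show ?thesis by blast
qed

lemma odd_ok_sum_zeta_defect: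
  assumes "odd_ok D" "g \<in> D"
  shows "(\<Sum>c\<in>comps n. g c * zeta_defect c) = 0"
proof -
  have "hom_comp n g \<in> D" "g \<in> QSym"
    using assms unfolding odd_ok_def graded_subcoalgebra_def is_subspace_def by blast+
  then have L: "evalf (bar zetaQ) (hom_comp n g) = evalf (conv_inv zetaQ) (hom_comp n g)"
    using assms(1) unfolding odd_ok_def by blast
  have supp: "{a. hom_comp n g a \<noteq> 0} \<subseteq> comps n"
    using \<open>g \<in> QSym\<close> by (auto simp: hom_comp_def QSym_def)
  have "0 = (\<Sum>c\<in>comps n. hom_comp n g c * zeta_defect c)"
    using L evalf_bar_zetaQ_minus_conv_inv[OF finite_comps supp] by simp
  also have "\<dots> = (\<Sum>c\<in>comps n. g c * zeta_defect c)"
    by (intro sum.cong) (auto simp: hom_comp_def)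
  finally show ?thesis by simp
qed

text \<open>Deconcatenating twice moves the relation from the homogeneous components of the
  elements of D into the middle of a word.\<close>

lemma odd_ok_defect_free:
  fixes D :: "(nat list \<Rightarrow> 'k::field) set"
  assumes D: "odd_ok D" and "f \<in> D"
  shows "defect_free f"
proof -
  have coprod: "in_tensor_sq D (coprod g)" if "g \<in> D" for g
    using D that unfolding odd_ok_def graded_subcoalgebra_def by blast
  have suffix: "(\<Sum>c\<in>comps n. g (c @ d) * zeta_defect c) = 0" if g: "g \<in> D" for g :: "nat list \<Rightarrow> 'k" and n d
  proof -
    obtain ps where ps: "\<forall>p\<in>set ps. fst p \<in> D \<and> snd p \<in> D"
      "\<And>x y. g (x @ y) = (\<Sum>p\<leftarrow>ps. fst p x * snd p y)"
      using in_tensor_sq_coprod_imp[OF coprod[OF g]] by blast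
    have "(\<Sum>c\<in>comps n. g (c @ d) * zeta_defect c) =
        (\<Sum>p\<leftarrow>ps. snd p d * (\<Sum>c\<in>comps n. fst p c * zeta_defect c))"
      by (simp add: ps(2) sum_list_mult_const[symmetric] sum_list_const_mult[symmetric]
          sum_sum_list_commute sum_distrib_left mult_ac)
    also have "\<dots> = (\<Sum>p\<leftarrow>ps. 0)"
      using ps(1) odd_ok_sum_zeta_defect[OF D] by (intro arg_cong[where f = sum_list] map_cong) auto
    finally show ?thesis by simp
  qed
  have "(\<Sum>c\<in>comps n. f (b @ c @ d) * zeta_defect c) = 0" for b d n
  proof -
    obtain ps where ps: "\<forall>p\<in>set ps. fst p \<in> D \<and> snd p \<in> D"
      "\<And>x y. f (x @ y) = (\<Sum>p\<leftarrow>ps. fst p x * snd p y)"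
      using in_tensor_sq_coprod_imp[OF coprod[OF \<open>f \<in> D\<close>]] by blast
    have "(\<Sum>c\<in>comps n. f (b @ c @ d) * zeta_defect c) =
        (\<Sum>p\<leftarrow>ps. fst p b * (\<Sum>c\<in>comps n. snd p (c @ d) * zeta_defect c))"
      by (simp add: ps(2) sum_list_mult_const[symmetric] sum_list_const_mult[symmetric]
          sum_sum_list_commute sum_distrib_left mult_ac)
    also have "\<dots> = (\<Sum>p\<leftarrow>ps. 0)"
      using ps(1) suffix by (intro arg_cong[where f = sum_list] map_cong) auto
    finally show ?thesis by simp
  qed
  then show ?thesis by (simp add: defect_free_def)
qed

lemma QSym_diff: "f \<in> QSym \<Longrightarrow> g \<in> QSym \<Longrightarrow> (\<lambda>a. f a - g a) \<in> QSym"
proof -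
  assume f: "f \<in> QSym" and g: "g \<in> QSym"
  have "{a. f a - g a \<noteq> 0} \<subseteq> {a. f a \<noteq> 0} \<union> {a. g a \<noteq> 0}" by auto
  then have "finite {a. f a - g a \<noteq> 0}"
    using f g by (auto simp: QSym_def intro: finite_subset)
  moreover have "is_comp a" if "f a - g a \<noteq> 0" for a
    using that f g by (cases "f a = 0") (auto simp: QSym_def)
  ultimately show ?thesis by (simp add: QSym_def)
qed

lemma QSym_length_bounded: "f \<in> QSym \<Longrightarrow> \<exists>K. \<forall>a. f a \<noteq> 0 \<longrightarrow> length a \<le> K"
  unfolding QSym_def using finite_nat_set_iff_bounded_le[of "length ` {a. f a \<noteq> 0}"] by auto

text \<open>Apply the relation at an even part e of gamma = b @ [e] @ d: every composition c of e
  other than [e] makes b @ c @ d longer than K, and zeta_defect [e] = 2.\<close>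

lemma defect_free_top_length_not_odd:
  fixes g :: "nat list \<Rightarrow> 'k::field"
  assumes two: "(2::'k) \<noteq> 0" and g: "defect_free g" and K: "\<And>a. g a \<noteq> 0 \<Longrightarrow> length a \<le> K"
    and \<gamma>: "length \<gamma> = K" "is_comp \<gamma>" "\<not> odd_comp \<gamma>"
  shows "g \<gamma> = 0"
proof -
  obtain i where i: "i < length \<gamma>" "even (\<gamma> ! i)"
    using \<gamma> by (auto simp: odd_comp_def in_set_conv_nth)
  define e where "e = \<gamma> ! i"
  define b where "b = take i \<gamma>"
  define d where "d = drop (Suc i) \<gamma>"
  have \<gamma>_eq: "\<gamma> = b @ [e] @ d"
    using i by (simp add: b_def e_def d_def id_take_nth_drop)
  have e: "0 < e" "even e"
    using \<gamma>(2) i nth_mem[OF i(1)] by (auto simp: e_def is_comp_def)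
  have "0 = (\<Sum>c\<in>comps e. g (b @ c @ d) * zeta_defect c)"
    using g by (simp add: defect_free_def)
  also have "\<dots> = (\<Sum>c\<in>{[e]}. g (b @ c @ d) * zeta_defect c)"
  proof (rule sum.mono_neutral_right)
    show "\<forall>c\<in>comps e - {[e]}. g (b @ c @ d) * zeta_defect c = 0"
    proof
      fix c assume "c \<in> comps e - {[e]}"
      then have "2 \<le> length c" using e by (intro comps_length_ge_2) auto
      then have "\<not> length (b @ c @ d) \<le> K" using \<gamma>(1) \<gamma>_eq by auto
      then have "g (b @ c @ d) = 0" using K by blast
      then show "g (b @ c @ d) * zeta_defect c = 0" by simp
    qed
  qed (use e in \<open>auto simp: finite_comps\<close>)
  also have "\<dots> = g \<gamma> * 2"
    using e \<gamma>_eq by (simp add: zeta_defect_comp zeta_ext_def)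
  finally show ?thesis using two by simp
qed

lemma sum_scaled_eta_top_length:
  fixes w :: "nat list \<Rightarrow> 'k::field"
  assumes two: "(2::'k) \<noteq> 0" and "finite A" "\<And>\<alpha>. \<alpha> \<in> A \<Longrightarrow> odd_comp \<alpha> \<and> length \<alpha> = K"
    and "K \<le> length a"
  shows "(\<Sum>\<alpha>\<in>A. w \<alpha> / 2 ^ K * eta \<alpha> a) = (if a \<in> A then w a else 0)"
proof -
  have "(\<Sum>\<alpha>\<in>A. w \<alpha> / 2 ^ K * eta \<alpha> a) = (\<Sum>\<alpha>\<in>A. if \<alpha> = a then w a else 0)"
  proof (intro sum.cong refl)
    fix \<alpha> assume "\<alpha> \<in> A"
    then have "length \<alpha> \<le> length a" "is_comp \<alpha>" "length \<alpha> = K"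
      using assms(3,4) by (auto simp: odd_comp_def)
    then have "eta \<alpha> a = (if \<alpha> = a then 2 ^ K else (0::'k))"
      by (auto simp: eta_length_ge)
    then show "w \<alpha> / 2 ^ K * eta \<alpha> a = (if \<alpha> = a then w a else 0)"
      using two by simp
  qed
  then show ?thesis using assms(2) by (simp add: sum.delta)
qed

text \<open>Subtracting suitable multiples of the eta_alpha, alpha odd of length K, kills the
  length-K part of a defect-free f; the even length-K coefficients vanish already.\<close>

lemma defect_free_peel_top_length:
  fixes f :: "nat list \<Rightarrow> 'k::field"
  assumes two: "(2::'k) \<noteq> 0" and f: "f \<in> QSym" "defect_free f"
    and K: "\<forall>a. f a \<noteq> 0 \<longrightarrow> length a \<le> K"
  shows "\<exists>h\<in>eta_span. (\<lambda>a. f a - h a) \<in> QSym \<and> defect_free (\<lambda>a. f a - h a) \<and>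
    (\<forall>a. f a - h a \<noteq> 0 \<longrightarrow> length a < K)"
proof -
  define A where "A = {\<alpha>. f \<alpha> \<noteq> 0 \<and> odd_comp \<alpha> \<and> length \<alpha> = K}"
  have A: "finite A" using f(1) unfolding A_def QSym_def by (auto intro: finite_subset)
  define h where "h a = (\<Sum>\<alpha>\<in>A. f \<alpha> / 2 ^ K * eta \<alpha> a)" for a
  define g where "g a = f a - h a" for a
  have h: "h \<in> eta_span"
    unfolding h_def using A by (intro eta_span_sum scaled_eta_in_eta_span) (auto simp: A_def)
  have "h \<in> QSym" using h eta_span_subset_QSym by blast
  then have g: "g \<in> QSym" "defect_free g"
    unfolding g_def using f(1) QSym_diff defect_free_diff[OF f(2) defect_free_eta_span[OF h]] by blast+
  have h_top: "h a = (if a \<in> A then f a else 0)" if "K \<le> length a" for a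
    unfolding h_def using two A that by (intro sum_scaled_eta_top_length) (auto simp: A_def)
  have g_long: "g a = 0" if "K < length a" for a
    using that K h_top[of a] by (auto simp: g_def A_def)
  have bound: "g b \<noteq> 0 \<Longrightarrow> length b \<le> K" for b
    using g_long not_le by blast
  have "g a = 0" if "length a = K" for a
  proof -
    consider "a \<in> A" | "a \<notin> A" "odd_comp a" | "\<not> is_comp a" | "is_comp a" "\<not> odd_comp a"
      by blast
    then show ?thesis
    proof cases
      case 1
      then show ?thesis using h_top that by (simp add: g_def)
    next
      case 2
      then show ?thesis using h_top[of a] that by (auto simp: g_def A_def)
    next
      case 3
      then show ?thesis using g(1) by (auto simp: QSym_def)
    next
      case 4
      then show ?thesis using defect_free_top_length_not_odd[OF two g(2) bound that] by blast
    qed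
  qed
  then have "\<forall>a. g a \<noteq> 0 \<longrightarrow> length a < K"
    using g_long by (metis linorder_neqE_nat)
  then show ?thesis using h g unfolding g_def by blast
qed

lemma defect_free_in_eta_span:
  fixes f :: "nat list \<Rightarrow> 'k::field"
  assumes two: "(2::'k) \<noteq> 0"
  shows "f \<in> QSym \<Longrightarrow> defect_free f \<Longrightarrow> \<forall>a. f a \<noteq> 0 \<longrightarrow> length a \<le> K \<Longrightarrow> f \<in> eta_span"
proof (induction K arbitrary: f)
  case 0
  then obtain h where "h \<in> eta_span" "\<forall>a. f a - h a \<noteq> 0 \<longrightarrow> length a < 0"
    using defect_free_peel_top_length[OF two] by blast
  then show ?case by (metis less_nat_zero_code eq_iff_diff_eq_0 ext)
next
  case (Suc K)
  then obtain h where h: "h \<in> eta_span" "(\<lambda>a. f a - h a) \<in> QSym" "defect_free (\<lambda>a. f a - h a)"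
    "\<forall>a. f a - h a \<noteq> 0 \<longrightarrow> length a < Suc K"
    using defect_free_peel_top_length[OF two] by blast
  then have "(\<lambda>a. f a - h a) \<in> eta_span"
    by (intro Suc.IH) auto
  then have "(\<lambda>a. (f a - h a) + h a) \<in> eta_span"
    using h(1) by (rule eta_span_add)
  then show ?case by simp
qed

lemma theta_mat_in_eta_span:
  assumes "(2::'k::field) \<noteq> 0" "is_comp a"
  shows "(theta_mat a :: nat list \<Rightarrow> 'k) \<in> eta_span"
proof (rule defect_free_in_eta_span)
  have "{c. (theta_mat a c :: 'k) \<noteq> 0} \<subseteq> comps (sum_list a)"
    by (auto dest: theta_mat_neq_0_imp)
  then show "(theta_mat a :: nat list \<Rightarrow> 'k) \<in> QSym"
    by (auto simp: QSym_def finite_comps intro: finite_subset dest: theta_mat_neq_0_imp)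
  show "\<forall>c. (theta_mat a c :: 'k) \<noteq> 0 \<longrightarrow> length c \<le> sum_list a"
    using comp_length_le_sum_list by (metis theta_mat_neq_0_imp)
qed (use assms defect_free_theta_mat in auto)

lemma Pi_minus_eq_eta_span:
  assumes "(2::'k::field) \<noteq> 0"
  shows "(Pi_minus :: (nat list \<Rightarrow> 'k) set) = eta_span"
proof -
  have largest: "D \<subseteq> eta_span" if "odd_ok (D :: (nat list \<Rightarrow> 'k) set)" for D
  proof
    fix f assume "f \<in> D"
    then have "f \<in> QSym" "defect_free f"
      using that odd_ok_defect_free unfolding odd_ok_def graded_subcoalgebra_def is_subspace_def
      by blast+
    then show "f \<in> eta_span"
      using QSym_length_bounded defect_free_in_eta_span[OF assms] by blast
  qed
  show ?thesis
    unfolding Pi_minus_def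
    by (rule the_equality) (use odd_ok_eta_span largest in blast)+
qed

lemma Theta_image_eq_eta_span:
  assumes "(2::'k::field) \<noteq> 0"
  shows "(Theta_image :: (nat list \<Rightarrow> 'k) set) = eta_span"
proof
  show "(Theta_image :: (nat list \<Rightarrow> 'k) set) \<subseteq> eta_span"
  proof
    fix F :: "nat list \<Rightarrow> 'k"
    assume "F \<in> Theta_image"
    then obtain f where f: "f \<in> QSym" "F = apply_mat theta_mat f"
      by (auto simp: Theta_image_def Theta_mat_eq_theta_mat)
    have "(\<lambda>b. \<Sum>a\<in>{a. f a \<noteq> 0}. f a * theta_mat a b) \<in> eta_span"
      using f(1) assms theta_mat_in_eta_span eta_span_scale
      by (intro eta_span_sum) (auto simp: QSym_def)
    then show "F \<in> eta_span" by (simp add: f(2) apply_mat_def)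
  qed
  show "eta_span \<subseteq> (Theta_image :: (nat list \<Rightarrow> 'k) set)"
  proof
    fix F :: "nat list \<Rightarrow> 'k"
    assume "F \<in> eta_span"
    then obtain c where c: "odd_coeffs c" "F = eta_comb c" by (auto simp: eta_span_def)
    then have "c \<in> QSym" by (auto simp: odd_coeffs_def QSym_def odd_comp_def)
    moreover have "F = apply_mat theta_mat c"
      using c by (simp add: fun_eq_iff apply_mat_def eta_comb_eq_sum_theta_mat)
    ultimately show "F \<in> Theta_image"
      unfolding Theta_image_def Theta_mat_eq_theta_mat by blast
  qed
qed

text \<open>Triangularity: eta_b has coefficient 2^k(b) at b and is supported on compositions
  at most as long as b.\<close>

lemma eta_comb_eq_0_imp:
  fixes c :: "nat list \<Rightarrow> 'k::field"
  assumes two: "(2::'k) \<noteq> 0" and c: "odd_coeffs c" and zero: "eta_comb c = (\<lambda>_. 0)"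
  shows "c = (\<lambda>_. 0)"
proof (rule ccontr)
  assume "c \<noteq> (\<lambda>_. 0)"
  define B where "B = {b. c b \<noteq> 0}"
  have B: "finite B" "B \<noteq> {}" using c \<open>c \<noteq> (\<lambda>_. 0)\<close> by (auto simp: odd_coeffs_def B_def)
  have "Max (length ` B) \<in> length ` B"
    using B by (intro Max_in) auto
  then obtain \<beta> where \<beta>: "\<beta> \<in> B" "length \<beta> = Max (length ` B)"
    by (metis imageE)
  then have \<beta>_max: "\<forall>b\<in>B. length b \<le> length \<beta>"
    using B(1) by simp
  have "eta_comb c \<beta> = (\<Sum>b\<in>B. if b = \<beta> then c \<beta> * 2 ^ length \<beta> else 0)"
    unfolding eta_comb_def B_def[symmetric]
    using \<beta>_max \<beta>(1) c
    by (intro sum.cong refl) (auto simp: eta_length_ge B_def odd_coeffs_def odd_comp_def)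
  also have "\<dots> = c \<beta> * 2 ^ length \<beta>"
    using \<beta>(1) B(1) by (simp add: sum.delta')
  finally show False
    using zero two \<beta>(1) by (simp add: B_def)
qed

lemma eta_comb_inj:
  fixes c1 c2 :: "nat list \<Rightarrow> 'k::field"
  assumes two: "(2::'k) \<noteq> 0" and c: "odd_coeffs c1" "odd_coeffs c2" and eq: "eta_comb c1 = eta_comb c2"
  shows "c1 = c2"
proof -
  define d where "d b = c1 b - c2 b" for b
  define S where "S = {b. c1 b \<noteq> 0} \<union> {b. c2 b \<noteq> 0}"
  have S: "finite S" using c by (auto simp: odd_coeffs_def S_def)
  have supp: "{b. d b \<noteq> 0} \<subseteq> S" by (auto simp: d_def S_def)
  have "d b \<noteq> 0 \<Longrightarrow> c1 b \<noteq> 0 \<or> c2 b \<noteq> 0" for b by (auto simp: d_def)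
  then have "odd_coeffs d"
    using c S supp unfolding odd_coeffs_def by (meson finite_subset)
  moreover have "eta_comb d = (\<lambda>_. 0)"
  proof
    fix a
    have "eta_comb c1 a = (\<Sum>b\<in>S. c1 b * eta b a)" "eta_comb c2 a = (\<Sum>b\<in>S. c2 b * eta b a)"
      by (rule eta_comb_superset[OF S], force simp: S_def)+
    moreover have "eta_comb d a = (\<Sum>b\<in>S. (c1 b - c2 b) * eta b a)"
      unfolding eta_comb_superset[OF S supp] d_def ..
    ultimately have "eta_comb d a = eta_comb c1 a - eta_comb c2 a"
      by (simp add: left_diff_distrib sum_subtractf)
    then show "eta_comb d a = 0" using eq by simp
  qed
  ultimately have "d = (\<lambda>_. 0)" by (rule eta_comb_eq_0_imp[OF two])
  then show ?thesis by (auto simp: d_def fun_eq_iff)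
qed

theorem proposition6p5:
  assumes "CHAR('k::field) \<noteq> 2"
  shows "(Pi_minus :: (nat list \<Rightarrow> 'k) set) = Theta_image
    \<and> (\<forall>b. odd_comp b \<longrightarrow> (eta b :: nat list \<Rightarrow> 'k) \<in> Pi_minus)
    \<and> (\<forall>f \<in> (Pi_minus :: (nat list \<Rightarrow> 'k) set).
         \<exists>!c :: nat list \<Rightarrow> 'k. finite {b. c b \<noteq> 0} \<and> (\<forall>b. c b \<noteq> 0 \<longrightarrow> odd_comp b) \<and>
            f = (\<lambda>a. \<Sum>b\<in>{b. c b \<noteq> 0}. c b * eta b a))"
proof -
  have two: "(2::'k) \<noteq> 0" using assms by (rule two_neq_zero_if_CHAR_neq_2)
  have "\<exists>!c :: nat list \<Rightarrow> 'k. odd_coeffs c \<and> f = eta_comb c" if "f \<in> eta_span" for f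
    using that eta_comb_inj[OF two] by (auto simp: eta_span_def)
  then show ?thesis
    unfolding Pi_minus_eq_eta_span[OF two] Theta_image_eq_eta_span[OF two]
    by (simp add: eta_in_eta_span odd_coeffs_def eta_comb_def)
qed

end
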